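(* Fix integers $d\geq1$ and, for $1\leq i\leq d$, $k_i\geq1$, a connected graph $F_i$ on $[k_i]$, and bounded measurable $\phi_i:\mathcal{D}_{k_i}\to\mathbb{R}$, $\psi_i:[0,1]^{k_i}\to\mathbb{R}$; fix a graphon $\kappa$ and a constant $B$. For each $n\geq1$ let $U=(U_1,\dots,U_n)$ be independent $[0,1]$-valued random variables and $(Y_{vw})_{1\leq v<w\leq n}$ random variables, conditionally independent given $U$, with $\mathbb{E}[Y_{vw}\mid U]=\kappa(U_v,U_w)$ and $|Y_{vw}|\leq B$ (laws may depend on $n$), and define $X_{i,a}$ and $N^{i,a}_j$ as in the context. Let $1\leq i,j\leq d$ and $m\geq2$. Then there exists a constant $C>0$ independent of $n$ such that for all $n$ $$\Bigg|\mathbb{E}\sum_{a\in\mathcal{I}^n_{k_i}}\sum_{b_1\in N^{i,a}_{j}}\cdots\sum_{b_m\in N^{i,a}_{j}}X_{j,b_1}\cdots X_{j,b_m}\Bigg|\leq\begin{cases}Cn^{1-m/2}&\text{if }k_i=1,\\ Cn^{k_i-m}&\text{if }k_i\geq2.\end{cases}$$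
   Context: A graphon is a symmetric measurable $\kappa:[0,1]^2\to[0,1]$. $\mathcal{I}^n_k=\{(a_1,\dots,a_k)\in\mathbb{N}^k:1\leq a_1<\cdots<a_k\leq n\}$, $\mathcal{D}_k=\{x\in[0,1]^k:x_1\leq\cdots\leq x_k\}$, $a/n=(a_1/n,\dots,a_k/n)$, $U_a=(U_{a_1},\dots,U_{a_k})$. For $a\in\mathcal{I}^n_{k_i}$: $T_{i,a}=\prod_{\{v,w\}\in E(F_i),v<w}(Y_{a_va_w}-\kappa(U_{a_v},U_{a_w}))$ if $k_i\geq2$, $T_{i,a}=1$ if $k_i=1$; $\Phi_{i,a}=\psi_i(U_{a_1})-\mathbb{E}\psi_i(U_{a_1})$ if $k_i=1$, $\Phi_{i,a}=\psi_i(U_a)$ if $k_i\geq2$; $X_{i,a}=\binom{n}{k_i}^{-1/2}\phi_i(a/n)\Phi_{i,a}T_{i,a}$. For $1\leq j\leq d$, $N^{i,a}_j=\{b\in\mathcal{I}^n_{k_j}:|\{a_1,\dots,a_{k_i}\}\cap\{b_1,\dots,b_{k_j}\}|\geq\min(2,k_i)\}$. *)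

theory Defs
  imports "HOL-Probability.Probability"
begin

definition incr_tuples :: "nat \<Rightarrow> nat \<Rightarrow> nat list set" where
  "incr_tuples n k = {a. length a = k \<and> sorted_wrt (<) a \<and> set a \<subseteq> {1..n}}"

text \<open>D_k, points of [0,1]^k are functions on positions {..<k} (extensional).\<close>
definition simplex_D :: "nat \<Rightarrow> (nat \<Rightarrow> real) set" where
  "simplex_D k = {x \<in> extensional {..<k}. \<forall>v w. v \<le> w \<longrightarrow> w < k \<longrightarrow> x v \<le> x w}"

definition unit_cube :: "nat \<Rightarrow> (nat \<Rightarrow> real) set" where
  "unit_cube k = {x \<in> extensional {..<k}. \<forall>v<k. x v \<in> {0..1}}"

text \<open>A (simple) connected graph on the vertex positions {0..<k} (standing for [k]),
  given by its edge set of pairs (v,w) with v < w.\<close>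
definition connected_graph :: "nat \<Rightarrow> (nat \<times> nat) set \<Rightarrow> bool" where
  "connected_graph k E \<longleftrightarrow> E \<subseteq> {(v,w). v < w \<and> w < k} \<and>
     (\<forall>v<k. \<forall>w<k. (v, w) \<in> (E \<union> E\<inverse>)\<^sup>*)"

definition graphon :: "(real \<Rightarrow> real \<Rightarrow> real) \<Rightarrow> bool" where
  "graphon \<kappa> \<longleftrightarrow> case_prod \<kappa> \<in> borel_measurable (restrict_space (borel \<Otimes>\<^sub>M borel) ({0..1} \<times> {0..1}))
     \<and> (\<forall>x\<in>{0..1}. \<forall>y\<in>{0..1}. \<kappa> x y = \<kappa> y x \<and> \<kappa> x y \<in> {0..1})"

definition gen_sigma :: "'a measure \<Rightarrow> ('i \<Rightarrow> 'a \<Rightarrow> real) \<Rightarrow> 'i set \<Rightarrow> 'a measure" where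
  "gen_sigma M X I = sigma (space M) (\<Union>i\<in>I. {X i -` A \<inter> space M | A. A \<in> sets borel})"

definition cond_indep_vars :: "'a measure \<Rightarrow> 'a measure \<Rightarrow> ('i \<Rightarrow> 'a \<Rightarrow> real) \<Rightarrow> 'i set \<Rightarrow> bool" where
  "cond_indep_vars M G X I \<longleftrightarrow>
     (\<forall>J A. J \<subseteq> I \<longrightarrow> finite J \<longrightarrow> (\<forall>j\<in>J. A j \<in> sets borel) \<longrightarrow>
        (AE \<omega> in M. real_cond_exp M G (\<lambda>\<omega>. \<Prod>j\<in>J. indicator (A j) (X j \<omega>)) \<omega>
                   = (\<Prod>j\<in>J. real_cond_exp M G (\<lambda>\<omega>. indicator (A j) (X j \<omega>)) \<omega>)))"

definition Uvec :: "(nat \<Rightarrow> 'a \<Rightarrow> real) \<Rightarrow> nat list \<Rightarrow> 'a \<Rightarrow> nat \<Rightarrow> real" where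
  "Uvec U a \<omega> = (\<lambda>v\<in>{..<length a}. U (a ! v) \<omega>)"

definition scaled :: "nat \<Rightarrow> nat list \<Rightarrow> nat \<Rightarrow> real" where
  "scaled n a = (\<lambda>v\<in>{..<length a}. real (a ! v) / real n)"

definition T_term :: "nat \<Rightarrow> (nat \<times> nat) set \<Rightarrow> (nat \<Rightarrow> nat \<Rightarrow> 'a \<Rightarrow> real) \<Rightarrow>
    (real \<Rightarrow> real \<Rightarrow> real) \<Rightarrow> (nat \<Rightarrow> 'a \<Rightarrow> real) \<Rightarrow> nat list \<Rightarrow> 'a \<Rightarrow> real" where
  "T_term k E Y \<kappa> U a \<omega> = (if k = 1 then 1 else
     (\<Prod>(v,w)\<in>E. Y (a ! v) (a ! w) \<omega> - \<kappa> (U (a ! v) \<omega>) (U (a ! w) \<omega>)))"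

definition Phi_term :: "'a measure \<Rightarrow> nat \<Rightarrow> ((nat \<Rightarrow> real) \<Rightarrow> real) \<Rightarrow> (nat \<Rightarrow> 'a \<Rightarrow> real) \<Rightarrow> nat list \<Rightarrow> 'a \<Rightarrow> real" where
  "Phi_term M k \<psi> U a \<omega> = (if k = 1
     then \<psi> (Uvec U a \<omega>) - integral\<^sup>L M (\<lambda>\<omega>'. \<psi> (Uvec U a \<omega>'))
     else \<psi> (Uvec U a \<omega>))"

definition X_term :: "'a measure \<Rightarrow> nat \<Rightarrow> nat \<Rightarrow> (nat \<times> nat) set \<Rightarrow> ((nat \<Rightarrow> real) \<Rightarrow> real) \<Rightarrow>
    ((nat \<Rightarrow> real) \<Rightarrow> real) \<Rightarrow> (real \<Rightarrow> real \<Rightarrow> real) \<Rightarrow> (nat \<Rightarrow> 'a \<Rightarrow> real) \<Rightarrow>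
    (nat \<Rightarrow> nat \<Rightarrow> 'a \<Rightarrow> real) \<Rightarrow> nat list \<Rightarrow> 'a \<Rightarrow> real" where
  "X_term M n k E \<phi> \<psi> \<kappa> U Y a \<omega> =
     (real (n choose k)) powr (-1/2) * \<phi> (scaled n a) * Phi_term M k \<psi> U a \<omega> * T_term k E Y \<kappa> U a \<omega>"

definition nbhd :: "nat \<Rightarrow> nat \<Rightarrow> nat \<Rightarrow> nat list \<Rightarrow> nat list set" where
  "nbhd n ki kj a = {b \<in> incr_tuples n kj. card (set a \<inter> set b) \<ge> min 2 ki}"

end

(* Expanding the expectation gives a sum over a in I^n_{k_i} and families b_1, ..., b_m of
   neighbours of a. If some vertex outside a lies in only one b_l, an edge of the l-th copy of
   F_j at that vertex gives a factor Y_vw - kappa(U_v, U_w) whose index pair occurs in no other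
   factor. All other factors are powers of other Y's times functions of U, so conditional
   independence given U lets us replace Y_vw by its conditional mean kappa(U_v, U_w), and the
   term vanishes. In the remaining families every vertex outside a is shared by two of the b_l;
   as each b_l has at most k_j - min(2, k_i) vertices outside a, the families involve at most
   k_i + r vertices, r = floor((k_j - min(2, k_i)) m / 2). There are O(n^(k_i + r)) of them,
   each contributing O(n^(-k_j m / 2)) because |X_{j,b}| = O(binom(n, k_j)^(-1/2)), and
   k_i + r - k_j m / 2 <= k_i - min(2, k_i) m / 2. *)

theory Submission
  imports Defs
begin

section \<open>Expectations of products via quantization\<close>

lemma (in finite_measure) integrable_bounded:
  fixes f :: "'a \<Rightarrow> real"
  assumes "f \<in> borel_measurable M" "\<And>\<omega>. \<omega> \<in> space M \<Longrightarrow> \<bar>f \<omega>\<bar> \<le> K"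
  shows "integrable M f"
  using assms by (intro integrable_const_bound[where B=K]) auto

lemma integrable_mult_bounded:
  fixes f g :: "'a \<Rightarrow> real"
  assumes "integrable M f" "g \<in> borel_measurable M" "\<And>\<omega>. \<omega> \<in> space M \<Longrightarrow> \<bar>g \<omega>\<bar> \<le> K"
  shows "integrable M (\<lambda>\<omega>. f \<omega> * g \<omega>)"
proof (rule Bochner_Integration.integrable_bound[where f="\<lambda>\<omega>. K * f \<omega>"])
  show "AE \<omega> in M. norm (f \<omega> * g \<omega>) \<le> norm (K * f \<omega>)"
  proof (rule AE_I2)
    fix \<omega> assume "\<omega> \<in> space M"
    then have "\<bar>g \<omega>\<bar> \<le> \<bar>K\<bar>" using assms(3) by fastforce
    then show "norm (f \<omega> * g \<omega>) \<le> norm (K * f \<omega>)"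
      by (simp add: abs_mult) (metis abs_ge_zero mult.commute mult_right_mono)
  qed
qed (use assms in auto)

lemma (in prob_space) abs_integral_le_bound:
  fixes f :: "'a \<Rightarrow> real"
  assumes "f \<in> borel_measurable M" "\<And>\<omega>. \<omega> \<in> space M \<Longrightarrow> \<bar>f \<omega>\<bar> \<le> K"
  shows "\<bar>integral\<^sup>L M f\<bar> \<le> K"
proof -
  have "\<bar>integral\<^sup>L M f\<bar> \<le> (\<integral>\<omega>. \<bar>f \<omega>\<bar> \<partial>M)" by (rule integral_abs_bound)
  also have "\<dots> \<le> K"
    using assms by (intro integral_le_const integrable_bounded[where K=K]) auto
  finally show ?thesis .
qed

lemma abs_prod_le_power:
  fixes f :: "'q \<Rightarrow> real"
  assumes "\<And>q. q \<in> S \<Longrightarrow> \<bar>f q\<bar> \<le> K"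
  shows "\<bar>\<Prod>q\<in>S. f q\<bar> \<le> K ^ card S"
proof -
  have "\<bar>\<Prod>q\<in>S. f q\<bar> = (\<Prod>q\<in>S. \<bar>f q\<bar>)" by (rule abs_prod)
  also have "\<dots> \<le> (\<Prod>q\<in>S. K)" by (rule prod_mono) (use assms in simp)
  finally show ?thesis by simp
qed

lemma abs_prod_indicator_le: "\<bar>\<Prod>j\<in>J. indicator (A j) (y j) :: real\<bar> \<le> 1"
  using abs_prod_le_power[of J "\<lambda>j. indicator (A j) (y j)" 1] by simp

lemma prod_eq_prod_power_image:
  fixes h :: "'j \<Rightarrow> 'b::comm_monoid_mult"
  assumes "finite S"
  shows "(\<Prod>q\<in>S. h (\<epsilon> q)) = (\<Prod>j\<in>\<epsilon> ` S. h j ^ card {q \<in> S. \<epsilon> q = j})"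
proof -
  have "(\<Prod>q\<in>S. h (\<epsilon> q)) = (\<Prod>j\<in>\<epsilon> ` S. \<Prod>q\<in>{q \<in> S. \<epsilon> q = j}. h (\<epsilon> q))"
    using assms by (intro prod.group[symmetric]) auto
  also have "\<dots> = (\<Prod>j\<in>\<epsilon> ` S. h j ^ card {q \<in> S. \<epsilon> q = j})"
    by (intro prod.cong refl) simp
  finally show ?thesis .
qed

lemma prod_diff_eq_sum_Pow:
  fixes f g :: "'q \<Rightarrow> 'b::comm_ring_1"
  assumes "finite Q" "q0 \<in> Q"
  shows "(\<Prod>q\<in>Q. f q - g q)
    = (f q0 - g q0) * (\<Sum>S\<in>Pow (Q - {q0}). (\<Prod>q\<in>S. f q) * (\<Prod>q\<in>Q - {q0} - S. - g q))"
proof -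
  have "(\<Prod>q\<in>Q. f q - g q) = (f q0 - g q0) * (\<Prod>q\<in>Q - {q0}. f q + - g q)"
    using assms by (simp add: prod.remove)
  also have "(\<Prod>q\<in>Q - {q0}. f q + - g q) = (\<Sum>S\<in>Pow (Q - {q0}). (\<Prod>q\<in>S. f q) * (\<Prod>q\<in>Q - {q0} - S. - g q))"
    using assms(1) by (intro prod_add) simp
  finally show ?thesis .
qed

definition quantize :: "nat \<Rightarrow> real \<Rightarrow> real" where
  "quantize N x = real_of_int \<lfloor>real (Suc N) * x\<rfloor> / real (Suc N)"

definition quantize_level :: "nat \<Rightarrow> int \<Rightarrow> real set" where
  "quantize_level N z = {x. \<lfloor>real (Suc N) * x\<rfloor> = z}"

definition quantize_range :: "real \<Rightarrow> nat \<Rightarrow> int set" where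
  "quantize_range H N = {-(\<lceil>real (Suc N) * \<bar>H\<bar>\<rceil> + 1) .. \<lceil>real (Suc N) * \<bar>H\<bar>\<rceil> + 1}"

lemma finite_quantize_range [simp]: "finite (quantize_range H N)"
  by (simp add: quantize_range_def)

lemma quantize_level_borel [measurable]: "quantize_level N z \<in> sets borel"
proof -
  have "quantize_level N z = {real_of_int z / real (Suc N) ..< (real_of_int z + 1) / real (Suc N)}"
    by (auto simp: quantize_level_def floor_eq_iff field_simps)
  then show ?thesis by simp
qed

lemma abs_quantize_sub_le: "\<bar>quantize N x - x\<bar> \<le> 1 / real (Suc N)"
proof -
  have "\<bar>real_of_int \<lfloor>real (Suc N) * x\<rfloor> - real (Suc N) * x\<bar> \<le> 1" by linarith
  then have "\<bar>real_of_int \<lfloor>real (Suc N) * x\<rfloor> - real (Suc N) * x\<bar> / real (Suc N) \<le> 1 / real (Suc N)"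
    by (intro divide_right_mono) auto
  moreover have "quantize N x - x = (real_of_int \<lfloor>real (Suc N) * x\<rfloor> - real (Suc N) * x) / real (Suc N)"
    by (simp add: quantize_def field_simps)
  ultimately show ?thesis by simp
qed

lemma quantize_tendsto: "(\<lambda>N. quantize N x) \<longlonglongrightarrow> x"
proof -
  have "(\<lambda>N. 1 / real (Suc N)) \<longlonglongrightarrow> 0"
    using LIMSEQ_Suc[OF lim_const_over_n[of 1]] by simp
  then have "(\<lambda>N. quantize N x - x) \<longlonglongrightarrow> 0"
    by (rule Lim_null_comparison[rotated]) (use abs_quantize_sub_le in auto)
  then show ?thesis by (simp add: LIM_zero_iff)
qed

lemma abs_quantize_le:
  assumes "\<bar>x\<bar> \<le> H"
  shows "\<bar>quantize N x\<bar> \<le> H + 1"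
proof -
  have "1 / real (Suc N) \<le> 1" by simp
  then show ?thesis using abs_quantize_sub_le[of N x] assms by linarith
qed

lemma quantize_eq_sum_levels:
  assumes "\<bar>x\<bar> \<le> H"
  shows "quantize N x
    = (\<Sum>z\<in>quantize_range H N. real_of_int z / real (Suc N) * indicator (quantize_level N z) x)"
proof -
  have "\<bar>real (Suc N) * x\<bar> \<le> real (Suc N) * \<bar>H\<bar>"
    using assms by (simp add: abs_mult mult_left_mono)
  then have "\<lfloor>real (Suc N) * x\<rfloor> \<in> quantize_range H N"
    unfolding quantize_range_def by (simp, linarith)
  moreover have "(\<Sum>z\<in>quantize_range H N. real_of_int z / real (Suc N) * indicator (quantize_level N z) x)
      = (\<Sum>z\<in>quantize_range H N. if z = \<lfloor>real (Suc N) * x\<rfloor> then real_of_int z / real (Suc N) else 0)"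
    by (intro sum.cong) (auto simp: quantize_level_def)
  ultimately show ?thesis by (simp add: quantize_def)
qed

lemma prod_quantize_eq_sum_indicators:
  assumes "finite J" "\<And>j. j \<in> J \<Longrightarrow> \<bar>z j\<bar> \<le> H j"
  shows "(\<Prod>j\<in>J. quantize N (z j))
    = (\<Sum>\<sigma>\<in>PiE J (\<lambda>j. quantize_range (H j) N).
         (\<Prod>j\<in>J. real_of_int (\<sigma> j) / real (Suc N)) * (\<Prod>j\<in>J. indicator (quantize_level N (\<sigma> j)) (z j)))"
proof -
  have "(\<Prod>j\<in>J. quantize N (z j))
      = (\<Prod>j\<in>J. \<Sum>l\<in>quantize_range (H j) N. real_of_int l / real (Suc N) * indicator (quantize_level N l) (z j))"
    using assms(2) by (intro prod.cong quantize_eq_sum_levels) auto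
  then show ?thesis using assms(1) by (simp add: prod_sum_PiE flip: prod.distrib)
qed

lemma integral_mult_prod_quantize_tendsto:
  fixes g :: "'a \<Rightarrow> real" and Z :: "'i \<Rightarrow> 'a \<Rightarrow> real"
  assumes g: "integrable M g"
    and Z: "\<And>j. j \<in> J \<Longrightarrow> Z j \<in> borel_measurable M"
      "\<And>j \<omega>. j \<in> J \<Longrightarrow> \<omega> \<in> space M \<Longrightarrow> \<bar>Z j \<omega>\<bar> \<le> H j"
  shows "(\<lambda>N. \<integral>\<omega>. g \<omega> * (\<Prod>j\<in>J. quantize N (Z j \<omega>)) \<partial>M)
      \<longlonglongrightarrow> (\<integral>\<omega>. g \<omega> * (\<Prod>j\<in>J. Z j \<omega>) \<partial>M)"
proof (rule integral_dominated_convergence[where w="\<lambda>\<omega>. \<bar>g \<omega>\<bar> * (\<Prod>j\<in>J. \<bar>H j\<bar> + 1)"])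
  show "AE \<omega> in M. (\<lambda>N. g \<omega> * (\<Prod>j\<in>J. quantize N (Z j \<omega>))) \<longlonglongrightarrow> g \<omega> * (\<Prod>j\<in>J. Z j \<omega>)"
    by (intro always_eventually allI tendsto_mult tendsto_const tendsto_prod quantize_tendsto)
  show "AE \<omega> in M. norm (g \<omega> * (\<Prod>j\<in>J. quantize N (Z j \<omega>))) \<le> \<bar>g \<omega>\<bar> * (\<Prod>j\<in>J. \<bar>H j\<bar> + 1)" for N
  proof (rule AE_I2)
    fix \<omega> assume "\<omega> \<in> space M"
    then have "\<bar>quantize N (Z j \<omega>)\<bar> \<le> \<bar>H j\<bar> + 1" if "j \<in> J" for j
      using Z(2)[OF that] by (intro abs_quantize_le) force
    then have "\<bar>\<Prod>j\<in>J. quantize N (Z j \<omega>)\<bar> \<le> (\<Prod>j\<in>J. \<bar>H j\<bar> + 1)"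
      by (simp add: abs_prod prod_mono)
    then show "norm (g \<omega> * (\<Prod>j\<in>J. quantize N (Z j \<omega>))) \<le> \<bar>g \<omega>\<bar> * (\<Prod>j\<in>J. \<bar>H j\<bar> + 1)"
      by (simp add: abs_mult mult_left_mono)
  qed
  show "(\<lambda>\<omega>. g \<omega> * (\<Prod>j\<in>J. quantize N (Z j \<omega>))) \<in> borel_measurable M" for N
    unfolding quantize_def using g Z(1) by measurable
qed (use g Z(1) in auto)

text \<open>Quantize each factor and pass to the limit by dominated convergence.\<close>
lemma integral_mult_prod_eq_of_indicators:
  fixes g1 g2 :: "'a \<Rightarrow> real" and Z :: "'i \<Rightarrow> 'a \<Rightarrow> real"
  assumes g: "integrable M g1" "integrable M g2" and J: "finite J"
    and Z: "\<And>j. j \<in> J \<Longrightarrow> Z j \<in> borel_measurable M"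
      "\<And>j \<omega>. j \<in> J \<Longrightarrow> \<omega> \<in> space M \<Longrightarrow> \<bar>Z j \<omega>\<bar> \<le> H j"
    and indicators: "\<And>A. (\<And>j. j \<in> J \<Longrightarrow> A j \<in> sets borel) \<Longrightarrow>
      (\<integral>\<omega>. g1 \<omega> * (\<Prod>j\<in>J. indicator (A j) (Z j \<omega>)) \<partial>M)
        = (\<integral>\<omega>. g2 \<omega> * (\<Prod>j\<in>J. indicator (A j) (Z j \<omega>)) \<partial>M)"
  shows "(\<integral>\<omega>. g1 \<omega> * (\<Prod>j\<in>J. Z j \<omega>) \<partial>M) = (\<integral>\<omega>. g2 \<omega> * (\<Prod>j\<in>J. Z j \<omega>) \<partial>M)"
proof -
  have quantized_eq: "(\<integral>\<omega>. g1 \<omega> * (\<Prod>j\<in>J. quantize N (Z j \<omega>)) \<partial>M)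
      = (\<integral>\<omega>. g2 \<omega> * (\<Prod>j\<in>J. quantize N (Z j \<omega>)) \<partial>M)" for N
  proof -
    define S where "S = PiE J (\<lambda>j. quantize_range (H j) N)"
    define coeff where "coeff \<sigma> = (\<Prod>j\<in>J. real_of_int (\<sigma> j) / real (Suc N))" for \<sigma>
    define ind where "ind \<sigma> \<omega> = (\<Prod>j\<in>J. indicator (quantize_level N (\<sigma> j)) (Z j \<omega>) :: real)" for \<sigma> \<omega>
    have ind: "ind \<sigma> \<in> borel_measurable M" "\<bar>ind \<sigma> \<omega>\<bar> \<le> 1" for \<sigma> \<omega>
      unfolding ind_def using Z(1) abs_prod_indicator_le by measurable
    have "(\<integral>\<omega>. g \<omega> * (\<Prod>j\<in>J. quantize N (Z j \<omega>)) \<partial>M) = (\<Sum>\<sigma>\<in>S. coeff \<sigma> * (\<integral>\<omega>. g \<omega> * ind \<sigma> \<omega> \<partial>M))"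
      if g: "integrable M g" for g
    proof -
      have "(\<integral>\<omega>. g \<omega> * (\<Prod>j\<in>J. quantize N (Z j \<omega>)) \<partial>M) = (\<integral>\<omega>. (\<Sum>\<sigma>\<in>S. coeff \<sigma> * (g \<omega> * ind \<sigma> \<omega>)) \<partial>M)"
        using prod_quantize_eq_sum_indicators[OF J Z(2)] unfolding S_def coeff_def ind_def
        by (intro Bochner_Integration.integral_cong) (simp_all add: sum_distrib_left ac_simps)
      also have "\<dots> = (\<Sum>\<sigma>\<in>S. coeff \<sigma> * (\<integral>\<omega>. g \<omega> * ind \<sigma> \<omega> \<partial>M))"
        using integrable_mult_bounded[OF g ind] by (subst Bochner_Integration.integral_sum) auto
      finally show ?thesis .
    qed
    moreover have "(\<integral>\<omega>. g1 \<omega> * ind \<sigma> \<omega> \<partial>M) = (\<integral>\<omega>. g2 \<omega> * ind \<sigma> \<omega> \<partial>M)" for \<sigma>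
      unfolding ind_def by (rule indicators) simp
    ultimately show ?thesis using g by simp
  qed
  note limit = integral_mult_prod_quantize_tendsto[where J=J and Z=Z and H=H, OF _ Z(1) Z(2)]
  show ?thesis using limit[OF g(1), unfolded quantized_eq] limit[OF g(2)] by (rule LIMSEQ_unique)
qed

section \<open>Conditional independence\<close>

lemma (in finite_measure_subalgebra) integral_mult_cond_exp:
  fixes c f :: "'a \<Rightarrow> real"
  assumes c: "c \<in> borel_measurable F" "integrable M c"
    and f: "f \<in> borel_measurable M" "\<And>\<omega>. \<omega> \<in> space M \<Longrightarrow> \<bar>f \<omega>\<bar> \<le> K"
  shows "(\<integral>\<omega>. c \<omega> * real_cond_exp M F f \<omega> \<partial>M) = (\<integral>\<omega>. c \<omega> * f \<omega> \<partial>M)"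
  using c f by (intro real_cond_exp_intg(2) integrable_mult_bounded)

locale bounded_cond_indep = prob_space M for M :: "'a measure" +
  fixes G :: "'a measure" and Y :: "'i \<Rightarrow> 'a \<Rightarrow> real" and I :: "'i set" and B :: real
  assumes subalg: "subalgebra M G"
    and Y_measurable: "\<And>i. i \<in> I \<Longrightarrow> Y i \<in> borel_measurable M"
    and Y_bounded: "\<And>i \<omega>. i \<in> I \<Longrightarrow> \<omega> \<in> space M \<Longrightarrow> \<bar>Y i \<omega>\<bar> \<le> B"
    and cond_indep: "cond_indep_vars M G Y I"

sublocale bounded_cond_indep \<subseteq> finite_measure_subalgebra M G
  by unfold_locales (rule subalg)

context bounded_cond_indep
begin

lemma measurable_from_G: "f \<in> borel_measurable G \<Longrightarrow> f \<in> borel_measurable M"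
  using measurable_from_subalg[OF subalg] by blast

lemma integrable_bounded_G:
  fixes c :: "'a \<Rightarrow> real"
  assumes "c \<in> borel_measurable G" "\<And>\<omega>. \<omega> \<in> space M \<Longrightarrow> \<bar>c \<omega>\<bar> \<le> K"
  shows "integrable M c"
  using assms by (intro integrable_bounded measurable_from_G)

lemma integral_mult_cond_exp_prod_indicator:
  fixes h :: "'a \<Rightarrow> real"
  assumes "J \<subseteq> I" "finite J" "\<And>j. j \<in> J \<Longrightarrow> A j \<in> sets borel" "h \<in> borel_measurable M"
  shows "(\<integral>\<omega>. h \<omega> * real_cond_exp M G (\<lambda>\<omega>. \<Prod>j\<in>J. indicator (A j) (Y j \<omega>)) \<omega> \<partial>M)
       = (\<integral>\<omega>. h \<omega> * (\<Prod>j\<in>J. real_cond_exp M G (\<lambda>\<omega>. indicator (A j) (Y j \<omega>)) \<omega>) \<partial>M)"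
proof (rule integral_cong_AE)
  have "AE \<omega> in M. real_cond_exp M G (\<lambda>\<omega>. \<Prod>j\<in>J. indicator (A j) (Y j \<omega>)) \<omega>
      = (\<Prod>j\<in>J. real_cond_exp M G (\<lambda>\<omega>. indicator (A j) (Y j \<omega>)) \<omega>)"
    using cond_indep assms(1-3) unfolding cond_indep_vars_def by blast
  then show "AE \<omega> in M. h \<omega> * real_cond_exp M G (\<lambda>\<omega>. \<Prod>j\<in>J. indicator (A j) (Y j \<omega>)) \<omega>
      = h \<omega> * (\<Prod>j\<in>J. real_cond_exp M G (\<lambda>\<omega>. indicator (A j) (Y j \<omega>)) \<omega>)"
    by (auto elim!: AE_mp)
qed (use assms(4) in \<open>auto intro!: borel_measurable_times borel_measurable_prod borel_measurable_cond_exp2\<close>)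

lemma prod_indicator_measurable:
  assumes "J \<subseteq> I" "\<And>j. j \<in> J \<Longrightarrow> A j \<in> sets borel"
  shows "(\<lambda>\<omega>. \<Prod>j\<in>J. indicator (A j) (Y j \<omega>) :: real) \<in> borel_measurable M"
  using assms Y_measurable by (intro borel_measurable_prod) (auto intro!: borel_measurable_indicator')

text \<open>Conditional independence is applied to the indicators indexed by \<open>insert e J\<close> and to
  those indexed by \<open>J\<close>.\<close>
lemma integral_indicator_prod_eq_cond_exp:
  fixes c :: "'a \<Rightarrow> real"
  assumes J: "J \<subseteq> I" "finite J" "e \<in> I" "e \<notin> J"
    and A: "A \<in> sets borel" "\<And>j. j \<in> J \<Longrightarrow> A' j \<in> sets borel"
    and c: "c \<in> borel_measurable G" "\<And>\<omega>. \<omega> \<in> space M \<Longrightarrow> \<bar>c \<omega>\<bar> \<le> K"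
  shows "(\<integral>\<omega>. c \<omega> * indicator A (Y e \<omega>) * (\<Prod>j\<in>J. indicator (A' j) (Y j \<omega>)) \<partial>M)
       = (\<integral>\<omega>. c \<omega> * real_cond_exp M G (\<lambda>\<omega>. indicator A (Y e \<omega>)) \<omega>
                * (\<Prod>j\<in>J. indicator (A' j) (Y j \<omega>)) \<partial>M)"
proof -
  let ?ce = "real_cond_exp M G"
  define A'' where "A'' = A'(e := A)"
  have A'': "\<And>j. j \<in> insert e J \<Longrightarrow> A'' j \<in> sets borel" using A by (auto simp: A''_def)
  have J_eq: "\<And>j. j \<in> J \<Longrightarrow> A'' j = A' j" using J(4) by (auto simp: A''_def)
  have ind_insert: "(\<Prod>j\<in>insert e J. indicator (A'' j) (Y j \<omega>) :: real)
      = indicator A (Y e \<omega>) * (\<Prod>j\<in>J. indicator (A' j) (Y j \<omega>))" for \<omega>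
    using J(2,4) J_eq by (simp add: A''_def cong: prod.cong)
  have ce_insert: "(\<Prod>j\<in>insert e J. ?ce (\<lambda>\<omega>. indicator (A'' j) (Y j \<omega>)) \<omega>)
      = ?ce (\<lambda>\<omega>. indicator A (Y e \<omega>)) \<omega> * (\<Prod>j\<in>J. ?ce (\<lambda>\<omega>. indicator (A' j) (Y j \<omega>)) \<omega>)" for \<omega>
    using J(2,4) J_eq by (simp add: A''_def cong: prod.cong)
  have c_integrable: "integrable M c" by (rule integrable_bounded_G[OF c])
  have ce_e: "?ce (\<lambda>\<omega>. indicator A (Y e \<omega>)) \<in> borel_measurable G"
    "integrable M (?ce (\<lambda>\<omega>. indicator A (Y e \<omega>)))"
    using Y_measurable[OF J(3)] A(1)
    by (auto intro!: real_cond_exp_int(1) integrable_bounded[where K=1])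
  have "(\<integral>\<omega>. c \<omega> * indicator A (Y e \<omega>) * (\<Prod>j\<in>J. indicator (A' j) (Y j \<omega>)) \<partial>M)
      = (\<integral>\<omega>. c \<omega> * (\<Prod>j\<in>insert e J. indicator (A'' j) (Y j \<omega>)) \<partial>M)"
    by (simp only: ind_insert mult.assoc)
  also have "\<dots> = (\<integral>\<omega>. c \<omega> * ?ce (\<lambda>\<omega>. \<Prod>j\<in>insert e J. indicator (A'' j) (Y j \<omega>)) \<omega> \<partial>M)"
    using J A''
    by (intro integral_mult_cond_exp[OF c(1) c_integrable prod_indicator_measurable abs_prod_indicator_le,
          symmetric]) auto
  also have "\<dots> = (\<integral>\<omega>. c \<omega> * (\<Prod>j\<in>insert e J. ?ce (\<lambda>\<omega>. indicator (A'' j) (Y j \<omega>)) \<omega>) \<partial>M)"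
    using J A'' measurable_from_G[OF c(1)] by (intro integral_mult_cond_exp_prod_indicator) auto
  also have "\<dots> = (\<integral>\<omega>. (c \<omega> * ?ce (\<lambda>\<omega>. indicator A (Y e \<omega>)) \<omega>)
                       * (\<Prod>j\<in>J. ?ce (\<lambda>\<omega>. indicator (A' j) (Y j \<omega>)) \<omega>) \<partial>M)"
    by (simp only: ce_insert mult.assoc)
  also have "\<dots> = (\<integral>\<omega>. (c \<omega> * ?ce (\<lambda>\<omega>. indicator A (Y e \<omega>)) \<omega>)
                       * ?ce (\<lambda>\<omega>. \<Prod>j\<in>J. indicator (A' j) (Y j \<omega>)) \<omega> \<partial>M)"
    using J A measurable_from_G[OF c(1)] measurable_from_G[OF ce_e(1)]
    by (intro integral_mult_cond_exp_prod_indicator[symmetric]) auto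
  also have "\<dots> = (\<integral>\<omega>. (c \<omega> * ?ce (\<lambda>\<omega>. indicator A (Y e \<omega>)) \<omega>)
                       * (\<Prod>j\<in>J. indicator (A' j) (Y j \<omega>)) \<partial>M)"
  proof (rule integral_mult_cond_exp[OF _ _ prod_indicator_measurable abs_prod_indicator_le])
    show "integrable M (\<lambda>\<omega>. c \<omega> * ?ce (\<lambda>\<omega>. indicator A (Y e \<omega>)) \<omega>)"
      using integrable_mult_bounded[OF ce_e(2) measurable_from_G[OF c(1)] c(2)] by (simp add: mult.commute)
  qed (use c(1) ce_e(1) J A in auto)
  finally show ?thesis .
qed

lemma abs_power_Y_le: "j \<in> I \<Longrightarrow> \<omega> \<in> space M \<Longrightarrow> \<bar>Y j \<omega> ^ p\<bar> \<le> \<bar>B\<bar> ^ p"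
  using Y_bounded[of j \<omega>] by (simp add: power_abs power_mono)

lemma weight_prod_power:
  fixes c :: "'a \<Rightarrow> real"
  assumes J: "J \<subseteq> I" and c: "c \<in> borel_measurable G" "\<And>\<omega>. \<omega> \<in> space M \<Longrightarrow> \<bar>c \<omega>\<bar> \<le> K"
  shows "(\<lambda>\<omega>. c \<omega> * (\<Prod>j\<in>J. Y j \<omega> ^ p j)) \<in> borel_measurable M"
    and "\<And>\<omega>. \<omega> \<in> space M \<Longrightarrow> \<bar>c \<omega> * (\<Prod>j\<in>J. Y j \<omega> ^ p j)\<bar> \<le> K * (\<Prod>j\<in>J. \<bar>B\<bar> ^ p j)"
proof -
  show "(\<lambda>\<omega>. c \<omega> * (\<Prod>j\<in>J. Y j \<omega> ^ p j)) \<in> borel_measurable M"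
    using measurable_from_G[OF c(1)] Y_measurable J by (intro borel_measurable_times borel_measurable_prod) auto
  fix \<omega> assume \<omega>: "\<omega> \<in> space M"
  have "\<bar>\<Prod>j\<in>J. Y j \<omega> ^ p j\<bar> \<le> (\<Prod>j\<in>J. \<bar>B\<bar> ^ p j)"
    unfolding abs_prod using abs_power_Y_le J \<omega> by (intro prod_mono) auto
  then show "\<bar>c \<omega> * (\<Prod>j\<in>J. Y j \<omega> ^ p j)\<bar> \<le> K * (\<Prod>j\<in>J. \<bar>B\<bar> ^ p j)"
    unfolding abs_mult using c(2)[OF \<omega>] by (intro mult_mono) auto
qed

text \<open>Conditional independence is only assumed for indicators; here the other factors are
  quantized.\<close>
lemma integral_indicator_mult_eq_cond_exp:
  fixes c :: "'a \<Rightarrow> real" and p :: "'i \<Rightarrow> nat"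
  assumes J: "J \<subseteq> I" "finite J" "e \<in> I" "e \<notin> J" and A: "A \<in> sets borel"
    and c: "c \<in> borel_measurable G" "\<And>\<omega>. \<omega> \<in> space M \<Longrightarrow> \<bar>c \<omega>\<bar> \<le> K"
  defines "W \<equiv> \<lambda>\<omega>. c \<omega> * (\<Prod>j\<in>J. Y j \<omega> ^ p j)"
  shows "(\<integral>\<omega>. W \<omega> * indicator A (Y e \<omega>) \<partial>M)
       = (\<integral>\<omega>. real_cond_exp M G W \<omega> * indicator A (Y e \<omega>) \<partial>M)"
proof -
  define ce_A where "ce_A = real_cond_exp M G (\<lambda>\<omega>. indicator A (Y e \<omega>))"
  have cM: "c \<in> borel_measurable M" by (rule measurable_from_G[OF c(1)])
  have ind_measurable: "(\<lambda>\<omega>. indicator A (Y e \<omega>) :: real) \<in> borel_measurable M"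
    using Y_measurable[OF J(3)] A by measurable
  have ce_A: "integrable M ce_A" "ce_A \<in> borel_measurable G"
    unfolding ce_A_def by (auto intro!: real_cond_exp_int(1) integrable_bounded[where K=1] ind_measurable)
  have W: "W \<in> borel_measurable M" "\<And>\<omega>. \<omega> \<in> space M \<Longrightarrow> \<bar>W \<omega>\<bar> \<le> K * (\<Prod>j\<in>J. \<bar>B\<bar> ^ p j)"
    unfolding W_def using weight_prod_power[OF J(1) c] by auto
  have "(\<integral>\<omega>. (c \<omega> * indicator A (Y e \<omega>)) * (\<Prod>j\<in>J. Y j \<omega> ^ p j) \<partial>M)
      = (\<integral>\<omega>. (c \<omega> * ce_A \<omega>) * (\<Prod>j\<in>J. Y j \<omega> ^ p j) \<partial>M)"
  proof (rule integral_mult_prod_eq_of_indicators[OF _ _ J(2), where H="\<lambda>j. \<bar>B\<bar> ^ p j"])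
    show "integrable M (\<lambda>\<omega>. c \<omega> * indicator A (Y e \<omega>))"
      by (intro integrable_mult_bounded[where K=1] integrable_bounded[OF cM c(2)] ind_measurable)
        (auto split: split_indicator)
    show "integrable M (\<lambda>\<omega>. c \<omega> * ce_A \<omega>)"
      using integrable_mult_bounded[OF ce_A(1) cM c(2)] by (simp add: mult.commute)
  next
    fix A' :: "'i \<Rightarrow> real set" assume A': "\<And>j. j \<in> J \<Longrightarrow> A' j \<in> sets borel"
    have preimage: "(\<lambda>y. y ^ p j) -` A' j \<in> sets borel" if "j \<in> J" for j
      using A'[OF that] by (intro measurable_sets_borel[of _ borel]) auto
    show "(\<integral>\<omega>. c \<omega> * indicator A (Y e \<omega>) * (\<Prod>j\<in>J. indicator (A' j) (Y j \<omega> ^ p j)) \<partial>M)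
        = (\<integral>\<omega>. c \<omega> * ce_A \<omega> * (\<Prod>j\<in>J. indicator (A' j) (Y j \<omega> ^ p j)) \<partial>M)"
      unfolding ce_A_def indicator_vimage[of "\<lambda>y. y ^ _", symmetric]
      by (rule integral_indicator_prod_eq_cond_exp[OF J A preimage c])
  qed (use J(1) Y_measurable abs_power_Y_le in auto)
  then have "(\<integral>\<omega>. W \<omega> * indicator A (Y e \<omega>) \<partial>M) = (\<integral>\<omega>. ce_A \<omega> * W \<omega> \<partial>M)"
    unfolding W_def by (simp add: ac_simps)
  also have "\<dots> = (\<integral>\<omega>. ce_A \<omega> * real_cond_exp M G W \<omega> \<partial>M)"
    using ce_A W by (intro integral_mult_cond_exp[symmetric])
  also have "\<dots> = (\<integral>\<omega>. real_cond_exp M G W \<omega> * indicator A (Y e \<omega>) \<partial>M)"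
    unfolding ce_A_def mult.commute[of _ "real_cond_exp M G W _"]
    using W ind_measurable by (intro integral_mult_cond_exp) (auto intro: integrable_bounded)
  finally show ?thesis .
qed

text \<open>Quantizing \<open>Y e\<close> reduces this to the indicator case.\<close>
lemma integral_eq_cond_exp_factor:
  fixes c :: "'a \<Rightarrow> real"
  assumes J: "J \<subseteq> I" "finite J" "e \<in> I" "e \<notin> J"
    and c: "c \<in> borel_measurable G" "\<And>\<omega>. \<omega> \<in> space M \<Longrightarrow> \<bar>c \<omega>\<bar> \<le> K"
  shows "(\<integral>\<omega>. Y e \<omega> * (c \<omega> * (\<Prod>j\<in>J. Y j \<omega> ^ p j)) \<partial>M)
       = (\<integral>\<omega>. real_cond_exp M G (Y e) \<omega> * (c \<omega> * (\<Prod>j\<in>J. Y j \<omega> ^ p j)) \<partial>M)"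
proof -
  let ?ce = "real_cond_exp M G"
  define W where "W \<omega> = c \<omega> * (\<Prod>j\<in>J. Y j \<omega> ^ p j)" for \<omega>
  have W: "W \<in> borel_measurable M" "\<And>\<omega>. \<omega> \<in> space M \<Longrightarrow> \<bar>W \<omega>\<bar> \<le> K * (\<Prod>j\<in>J. \<bar>B\<bar> ^ p j)"
    unfolding W_def using weight_prod_power[OF J(1) c] by auto
  have Ye: "Y e \<in> borel_measurable M" "\<And>\<omega>. \<omega> \<in> space M \<Longrightarrow> \<bar>Y e \<omega>\<bar> \<le> B"
    using Y_measurable Y_bounded J(3) by auto
  have "(\<integral>\<omega>. W \<omega> * (\<Prod>j\<in>{e}. Y j \<omega>) \<partial>M) = (\<integral>\<omega>. ?ce W \<omega> * (\<Prod>j\<in>{e}. Y j \<omega>) \<partial>M)"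
  proof (rule integral_mult_prod_eq_of_indicators)
    fix A :: "'i \<Rightarrow> real set" assume "\<And>j. j \<in> {e} \<Longrightarrow> A j \<in> sets borel"
    then show "(\<integral>\<omega>. W \<omega> * (\<Prod>j\<in>{e}. indicator (A j) (Y j \<omega>)) \<partial>M)
        = (\<integral>\<omega>. ?ce W \<omega> * (\<Prod>j\<in>{e}. indicator (A j) (Y j \<omega>)) \<partial>M)"
      using integral_indicator_mult_eq_cond_exp[OF J _ c, where A="A e" and p=p] unfolding W_def by simp
  qed (use Ye W in \<open>auto intro: integrable_bounded\<close>)
  then have "(\<integral>\<omega>. Y e \<omega> * W \<omega> \<partial>M) = (\<integral>\<omega>. ?ce W \<omega> * Y e \<omega> \<partial>M)"
    by (simp add: mult.commute)
  also have "\<dots> = (\<integral>\<omega>. ?ce W \<omega> * ?ce (Y e) \<omega> \<partial>M)"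
    using W Ye by (intro integral_mult_cond_exp[symmetric]) (auto intro: integrable_bounded)
  also have "\<dots> = (\<integral>\<omega>. ?ce (Y e) \<omega> * W \<omega> \<partial>M)"
    unfolding mult.commute[of "?ce W _"]
    using Ye W by (intro integral_mult_cond_exp) (auto intro: integrable_bounded)
  finally show ?thesis unfolding W_def .
qed

lemma integral_centered_mult_eq_0:
  fixes c \<kappa> :: "'a \<Rightarrow> real"
  assumes J: "J \<subseteq> I" "finite J" "e \<in> I" "e \<notin> J"
    and \<kappa>: "\<kappa> \<in> borel_measurable M" "AE \<omega> in M. real_cond_exp M G (Y e) \<omega> = \<kappa> \<omega>"
    and c: "c \<in> borel_measurable G" "\<And>\<omega>. \<omega> \<in> space M \<Longrightarrow> \<bar>c \<omega>\<bar> \<le> K"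
  shows "(\<integral>\<omega>. (Y e \<omega> - \<kappa> \<omega>) * (c \<omega> * (\<Prod>j\<in>J. Y j \<omega> ^ p j)) \<partial>M) = 0"
proof -
  let ?ce = "real_cond_exp M G"
  define W where "W \<omega> = c \<omega> * (\<Prod>j\<in>J. Y j \<omega> ^ p j)" for \<omega>
  have W_measurable: "W \<in> borel_measurable M"
    and W_bounded: "\<And>\<omega>. \<omega> \<in> space M \<Longrightarrow> \<bar>W \<omega>\<bar> \<le> K * (\<Prod>j\<in>J. \<bar>B\<bar> ^ p j)"
    unfolding W_def using weight_prod_power[OF J(1) c] by auto
  have Ye: "Y e \<in> borel_measurable M" "\<And>\<omega>. \<omega> \<in> space M \<Longrightarrow> \<bar>Y e \<omega>\<bar> \<le> B"
    using Y_measurable Y_bounded J(3) by auto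
  have "integrable M (\<lambda>\<omega>. Y e \<omega> * W \<omega>)"
    using Ye W_measurable W_bounded by (intro integrable_mult_bounded integrable_bounded)
  moreover have "integrable M (\<lambda>\<omega>. ?ce (Y e) \<omega> * W \<omega>)"
    using Ye W_measurable W_bounded by (intro integrable_mult_bounded real_cond_exp_int(1) integrable_bounded)
  moreover have "(\<integral>\<omega>. Y e \<omega> * W \<omega> \<partial>M) = (\<integral>\<omega>. ?ce (Y e) \<omega> * W \<omega> \<partial>M)"
    unfolding W_def by (rule integral_eq_cond_exp_factor[OF J c])
  ultimately have "(\<integral>\<omega>. (Y e \<omega> - ?ce (Y e) \<omega>) * W \<omega> \<partial>M) = 0"
    by (simp add: left_diff_distrib)
  moreover have "(\<integral>\<omega>. (Y e \<omega> - \<kappa> \<omega>) * W \<omega> \<partial>M) = (\<integral>\<omega>. (Y e \<omega> - ?ce (Y e) \<omega>) * W \<omega> \<partial>M)"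
    using \<kappa> Ye(1) W_measurable by (intro integral_cong_AE) auto
  ultimately show ?thesis unfolding W_def by simp
qed

text \<open>Expanding all factors but the one at \<open>q0\<close> reduces the claim to
  \<open>integral_centered_mult_eq_0\<close>, since no other factor involves the index \<open>\<epsilon> q0\<close>.\<close>
lemma integral_prod_centered_eq_0:
  fixes c :: "'a \<Rightarrow> real" and \<kappa> :: "'i \<Rightarrow> 'a \<Rightarrow> real" and \<epsilon> :: "'q \<Rightarrow> 'i"
  assumes Q: "finite Q" "q0 \<in> Q" "\<And>q. q \<in> Q \<Longrightarrow> \<epsilon> q \<in> I"
      "\<And>q. q \<in> Q \<Longrightarrow> q \<noteq> q0 \<Longrightarrow> \<epsilon> q \<noteq> \<epsilon> q0"
    and \<kappa>: "\<And>i. i \<in> I \<Longrightarrow> \<kappa> i \<in> borel_measurable G"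
      "\<And>i \<omega>. i \<in> I \<Longrightarrow> \<omega> \<in> space M \<Longrightarrow> \<bar>\<kappa> i \<omega>\<bar> \<le> L"
      "AE \<omega> in M. real_cond_exp M G (Y (\<epsilon> q0)) \<omega> = \<kappa> (\<epsilon> q0) \<omega>"
    and c: "c \<in> borel_measurable G" "\<And>\<omega>. \<omega> \<in> space M \<Longrightarrow> \<bar>c \<omega>\<bar> \<le> K"
  shows "(\<integral>\<omega>. c \<omega> * (\<Prod>q\<in>Q. Y (\<epsilon> q) \<omega> - \<kappa> (\<epsilon> q) \<omega>) \<partial>M) = 0"
proof -
  define e where "e = \<epsilon> q0"
  define Q' where "Q' = Q - {q0}"
  define c' where "c' S \<omega> = c \<omega> * (\<Prod>q\<in>Q' - S. - \<kappa> (\<epsilon> q) \<omega>)" for S \<omega>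
  define summand where "summand S \<omega> = (Y e \<omega> - \<kappa> e \<omega>) * (c' S \<omega> * (\<Prod>q\<in>S. Y (\<epsilon> q) \<omega>))" for S \<omega>
  have e: "e \<in> I" "\<kappa> e \<in> borel_measurable M"
    using Q(2,3) \<kappa>(1) measurable_from_G unfolding e_def by auto
  have Q': "finite Q'" "\<And>q. q \<in> Q' \<Longrightarrow> q \<in> Q \<and> \<epsilon> q \<noteq> e"
    using Q unfolding Q'_def e_def by auto
  have c'_measurable: "c' S \<in> borel_measurable G" for S
    unfolding c'_def using c(1) \<kappa>(1) Q' Q(3) by (intro borel_measurable_times borel_measurable_prod) auto
  have c'_bounded: "\<bar>c' S \<omega>\<bar> \<le> K * L ^ card (Q' - S)" if "\<omega> \<in> space M" for S \<omega>
    unfolding c'_def abs_mult using c(2)[OF that] \<kappa>(2)[OF Q(3) that] Q'(2)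
    by (intro mult_mono abs_prod_le_power) (auto intro: order_trans[OF abs_ge_zero c(2)[OF that]])
  have summand: "integrable M (summand S) \<and> (\<integral>\<omega>. summand S \<omega> \<partial>M) = 0" if S: "S \<subseteq> Q'" for S
  proof -
    define p where "p j = card {q \<in> S. \<epsilon> q = j}" for j
    have "finite S" using S Q'(1) by (rule finite_subset)
    then have summand_eq: "summand S \<omega> = (Y e \<omega> - \<kappa> e \<omega>) * (c' S \<omega> * (\<Prod>j\<in>\<epsilon> ` S. Y j \<omega> ^ p j))" for \<omega>
      unfolding summand_def p_def by (subst prod_eq_prod_power_image) auto
    have J: "\<epsilon> ` S \<subseteq> I" "finite (\<epsilon> ` S)" "e \<notin> \<epsilon> ` S"
      using S Q'(2) Q(3) \<open>finite S\<close> by auto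
    have "integrable M (\<lambda>\<omega>. Y e \<omega> - \<kappa> e \<omega>)"
      using Y_measurable Y_bounded \<kappa>(2) e
      by (intro integrable_bounded[where K="\<bar>B\<bar> + \<bar>L\<bar>"]) (auto simp: abs_diff_le_iff, force+)
    then have "integrable M (summand S)"
      unfolding summand_eq using weight_prod_power[OF J(1) c'_measurable c'_bounded, where p=p]
      by (rule integrable_mult_bounded)
    moreover have "(\<integral>\<omega>. summand S \<omega> \<partial>M) = 0"
      unfolding summand_eq
      by (rule integral_centered_mult_eq_0[OF J(1,2) e(1) J(3) e(2) \<kappa>(3)[folded e_def] c'_measurable c'_bounded])
    ultimately show ?thesis by simp
  qed
  have "c \<omega> * (\<Prod>q\<in>Q. Y (\<epsilon> q) \<omega> - \<kappa> (\<epsilon> q) \<omega>) = (\<Sum>S\<in>Pow Q'. summand S \<omega>)" for \<omega>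
    unfolding prod_diff_eq_sum_Pow[OF Q(1,2)] summand_def c'_def Q'_def e_def
    by (simp add: sum_distrib_left ac_simps)
  then have "(\<integral>\<omega>. c \<omega> * (\<Prod>q\<in>Q. Y (\<epsilon> q) \<omega> - \<kappa> (\<epsilon> q) \<omega>) \<partial>M) = (\<Sum>S\<in>Pow Q'. \<integral>\<omega>. summand S \<omega> \<partial>M)"
    using summand by (simp add: Bochner_Integration.integral_sum)
  also have "\<dots> = 0" using summand by simp
  finally show ?thesis .
qed

end

section \<open>Families of increasing tuples\<close>

lemma incr_tuplesD:
  assumes "a \<in> incr_tuples n k"
  shows "length a = k" "sorted_wrt (<) a" "set a \<subseteq> {1..n}" "distinct a" "card (set a) = k"
proof -
  show l: "length a = k" and s: "sorted_wrt (<) a" and "set a \<subseteq> {1..n}"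
    using assms by (auto simp: incr_tuples_def)
  show d: "distinct a" using s by (simp add: strict_sorted_iff)
  show "card (set a) = k" using distinct_card[OF d] l by simp
qed

lemma finite_incr_tuples: "finite (incr_tuples n k)"
  and card_incr_tuples_le: "card (incr_tuples n k) \<le> n ^ k"
proof -
  have sub: "incr_tuples n k \<subseteq> {xs. set xs \<subseteq> {1..n} \<and> length xs = k}"
    by (auto simp: incr_tuples_def)
  have fin: "finite {xs. set xs \<subseteq> {1..n} \<and> length xs = k}" by (rule finite_lists_length_eq) simp
  show "finite (incr_tuples n k)" by (rule finite_subset[OF sub fin])
  have "card (incr_tuples n k) \<le> card {xs. set xs \<subseteq> {1..n} \<and> length xs = k}"
    by (rule card_mono[OF fin sub])
  then show "card (incr_tuples n k) \<le> n ^ k" by (simp add: card_lists_length_eq)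
qed

lemma finite_nbhd: "finite (nbhd n ki kj a)"
  unfolding nbhd_def using finite_incr_tuples by auto

lemma nbhd_incr_tuples: "b \<in> nbhd n ki kj a \<Longrightarrow> b \<in> incr_tuples n kj"
  by (simp add: nbhd_def)

lemma nbhd_eq_empty:
  assumes "kj < min 2 ki"
  shows "nbhd n ki kj a = {}"
proof -
  have "card (set a \<inter> set b) < min 2 ki" if "b \<in> incr_tuples n kj" for b
  proof -
    have "card (set a \<inter> set b) \<le> card (set b)" by (intro card_mono) auto
    then show ?thesis using incr_tuplesD(5)[OF that] assms by simp
  qed
  then show ?thesis unfolding nbhd_def by force
qed

lemma card_diff_le_if_mem_nbhd:
  assumes "b \<in> nbhd n ki kj a"
  shows "card (set b - set a) \<le> kj - min 2 ki"
proof -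
  have "card (set b - set a) = card (set b) - card (set a \<inter> set b)"
    by (simp add: card_Diff_subset_Int Int_commute)
  then show ?thesis
    using assms incr_tuplesD(5)[OF nbhd_incr_tuples[OF assms]] by (simp add: nbhd_def) arith
qed

lemma two_mul_card_le_sum_card:
  fixes S :: "nat \<Rightarrow> 'a set"
  assumes W: "finite W" and S: "\<And>l. l < m \<Longrightarrow> S l \<subseteq> W" "\<And>l. l < m \<Longrightarrow> finite (S l)"
    and twice: "\<And>x. x \<in> W \<Longrightarrow> card {l \<in> {..<m}. x \<in> S l} \<ge> 2"
  shows "2 * card W \<le> (\<Sum>l<m. card (S l))"
proof -
  have "(\<Sum>x\<in>W. 2) \<le> (\<Sum>x\<in>W. card {l \<in> {..<m}. x \<in> S l})" by (rule sum_mono) (rule twice)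
  also have "\<dots> = card (SIGMA x:W. {l \<in> {..<m}. x \<in> S l})"
    using W by (subst card_SigmaI) auto
  also have "(SIGMA x:W. {l \<in> {..<m}. x \<in> S l}) = prod.swap ` (SIGMA l:{..<m}. S l)"
    using S(1) by (auto simp: image_iff) blast
  also have "card (prod.swap ` (SIGMA l:{..<m}. S l)) = card (SIGMA l:{..<m}. S l)"
    by (rule card_image) (simp add: inj_on_def)
  also have "\<dots> = (\<Sum>l<m. card (S l))"
    using S(2) by (subst card_SigmaI) auto
  finally show ?thesis by (simp add: mult.commute)
qed

definition outside_vertices_shared :: "nat \<Rightarrow> nat list \<Rightarrow> (nat \<Rightarrow> nat list) \<Rightarrow> bool" where
  "outside_vertices_shared m a b \<longleftrightarrow>
     (\<forall>l<m. \<forall>x\<in>set (b l) - set a. \<exists>l'<m. l' \<noteq> l \<and> x \<in> set (b l'))"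

lemma card_outside_vertices_le:
  assumes b: "b \<in> PiE {..<m} (\<lambda>_. nbhd n ki kj a)" and shared: "outside_vertices_shared m a b"
  shows "card ((\<Union>l<m. set (b l)) - set a) \<le> (kj - min 2 ki) * m div 2"
proof -
  define W where "W = (\<Union>l<m. set (b l)) - set a"
  have W: "finite W" unfolding W_def by auto
  have "2 * card W \<le> (\<Sum>l<m. card (set (b l) - set a))"
  proof (rule two_mul_card_le_sum_card[OF W])
    fix x assume "x \<in> W"
    then obtain l where l: "l < m" "x \<in> set (b l)" "x \<notin> set a" unfolding W_def by blast
    then obtain l' where l': "l' < m" "l' \<noteq> l" "x \<in> set (b l')"
      using shared unfolding outside_vertices_shared_def by blast
    have "card {l, l'} \<le> card {l \<in> {..<m}. x \<in> set (b l) - set a}"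
      using l l' by (intro card_mono) auto
    then show "card {l \<in> {..<m}. x \<in> set (b l) - set a} \<ge> 2" using l'(2) by simp
  qed (auto simp: W_def)
  also have "\<dots> \<le> (\<Sum>l<m. kj - min 2 ki)"
    using b by (intro sum_mono card_diff_le_if_mem_nbhd) auto
  also have "\<dots> = (kj - min 2 ki) * m" by simp
  finally show ?thesis unfolding W_def by linarith
qed

text \<open>A pair \<open>(a, b)\<close> with shared outside vertices is determined by \<open>a\<close>, a list \<open>w\<close> of
  \<open>r\<close> further vertices, and, for each entry of each \<open>b l\<close>, its position in \<open>a @ w\<close>.\<close>
lemma outside_vertices_shared_encoding:
  assumes n: "n \<ge> 1" and a: "a \<in> incr_tuples n ki" and b: "b \<in> PiE {..<m} (\<lambda>_. nbhd n ki kj a)"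
    and shared: "outside_vertices_shared m a b"
  defines "r \<equiv> (kj - min 2 ki) * m div 2"
  obtains w g where "set w \<subseteq> {1..n}" "length w = r" "g \<in> PiE {..<m} (\<lambda>_. PiE {..<kj} (\<lambda>_. {..<ki + r}))"
    "b = (\<lambda>l\<in>{..<m}. map (\<lambda>p. (a @ w) ! g l p) [0..<kj])"
proof -
  define W where "W = (\<Union>l<m. set (b l)) - set a"
  have bl: "\<And>l. l < m \<Longrightarrow> b l \<in> incr_tuples n kj" using b by (auto intro: nbhd_incr_tuples)
  have "card W \<le> r" "finite W" "W \<subseteq> {1..n}"
    using card_outside_vertices_le[OF b shared] incr_tuplesD(3)[OF bl] unfolding W_def r_def by auto
  then obtain w where w: "set w \<subseteq> {1..n}" "length w = r" "W \<subseteq> set w"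
    using n by (intro that[of "sorted_list_of_set W @ replicate (r - card W) 1"]) auto
  have "\<exists>i < ki + r. (a @ w) ! i = b l ! p" if "l < m" "p < kj" for l p
  proof -
    have "b l ! p \<in> set (b l)" using that incr_tuplesD(1)[OF bl[OF that(1)]] by simp
    then have "b l ! p \<in> set (a @ w)" using that(1) w(3) unfolding W_def by auto
    then obtain i where "i < length (a @ w)" "(a @ w) ! i = b l ! p" by (metis in_set_conv_nth)
    then show ?thesis using incr_tuplesD(1)[OF a] w(2) by auto
  qed
  then obtain g where g: "\<And>l p. l < m \<Longrightarrow> p < kj \<Longrightarrow> g l p < ki + r \<and> (a @ w) ! g l p = b l ! p"
    by metis
  define g' where "g' = (\<lambda>l\<in>{..<m}. \<lambda>p\<in>{..<kj}. g l p)"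
  have "map (\<lambda>p. (a @ w) ! (g' l p)) [0..<kj] = b l" if "l < m" for l
    using incr_tuplesD(1)[OF bl[OF that]] g[OF that] that by (intro nth_equalityI) (auto simp: g'_def)
  then have "b = (\<lambda>l\<in>{..<m}. map (\<lambda>p. (a @ w) ! g' l p) [0..<kj])"
    using b by (auto simp: PiE_def extensional_def)
  moreover have "g' \<in> PiE {..<m} (\<lambda>_. PiE {..<kj} (\<lambda>_. {..<ki + r}))" using g unfolding g'_def by auto
  ultimately show ?thesis using w that by blast
qed

lemma card_outside_vertices_shared_le:
  fixes m ki kj n :: nat
  assumes n: "n \<ge> 1"
  defines "r \<equiv> (kj - min 2 ki) * m div 2"
  shows "card {(a, b). a \<in> incr_tuples n ki \<and> b \<in> PiE {..<m} (\<lambda>_. nbhd n ki kj a)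
                       \<and> outside_vertices_shared m a b}
         \<le> n ^ (ki + r) * (ki + r) ^ (kj * m)"
proof -
  define Ws where "Ws = {w. set w \<subseteq> {1..n} \<and> length w = r}"
  define Pos where "Pos = PiE {..<m} (\<lambda>_. PiE {..<kj} (\<lambda>_. {..<ki + r}))"
  define decode where "decode = (\<lambda>(a::nat list, w::nat list, g::nat \<Rightarrow> nat \<Rightarrow> nat).
      (a, \<lambda>l\<in>{..<m}. map (\<lambda>p. (a @ w) ! (g l p)) [0..<kj]))"
  have "{(a, b). a \<in> incr_tuples n ki \<and> b \<in> PiE {..<m} (\<lambda>_. nbhd n ki kj a)
                 \<and> outside_vertices_shared m a b} \<subseteq> decode ` (incr_tuples n ki \<times> Ws \<times> Pos)"
  proof (rule subsetI, clarify)
    fix a b assume a: "a \<in> incr_tuples n ki" and b: "b \<in> PiE {..<m} (\<lambda>_. nbhd n ki kj a)"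
      and shared: "outside_vertices_shared m a b"
    obtain w g where "set w \<subseteq> {1..n}" "length w = r" "g \<in> Pos"
      "b = (\<lambda>l\<in>{..<m}. map (\<lambda>p. (a @ w) ! g l p) [0..<kj])"
      by (rule outside_vertices_shared_encoding[OF n a b shared]) (simp add: r_def Pos_def)
    then show "(a, b) \<in> decode ` (incr_tuples n ki \<times> Ws \<times> Pos)"
      using a unfolding decode_def Ws_def by force
  qed
  then have "card {(a, b). a \<in> incr_tuples n ki \<and> b \<in> PiE {..<m} (\<lambda>_. nbhd n ki kj a)
                 \<and> outside_vertices_shared m a b} \<le> card (incr_tuples n ki \<times> Ws \<times> Pos)"
    unfolding Ws_def Pos_def using finite_incr_tuples
    by (intro surj_card_le) (auto intro!: finite_lists_length_eq finite_PiE)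
  also have "\<dots> = card (incr_tuples n ki) * n ^ r * (ki + r) ^ (kj * m)"
    unfolding Ws_def Pos_def by (simp add: card_cartesian_product card_lists_length_eq card_PiE power_mult)
  also have "\<dots> \<le> n ^ ki * n ^ r * (ki + r) ^ (kj * m)"
    using card_incr_tuples_le by (intro mult_right_mono) auto
  finally show ?thesis by (simp add: power_add)
qed

lemma connected_graph_edgeD: "connected_graph k E \<Longrightarrow> (v, w) \<in> E \<Longrightarrow> v < w \<and> w < k"
  unfolding connected_graph_def by blast

lemma finite_connected_graph_edges: "connected_graph k E \<Longrightarrow> finite E"
  unfolding connected_graph_def by (rule finite_subset[of _ "{..<k} \<times> {..<k}"]) auto

lemma connected_graph_incident_edge:
  assumes E: "connected_graph k E" and "2 \<le> k" "p < k"
  obtains v w where "(v, w) \<in> E" "v = p \<or> w = p"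
proof -
  define p' where "p' = (if p = 0 then 1 else (0::nat))"
  have "p' < k" "p' \<noteq> p" using assms unfolding p'_def by auto
  moreover have "(p, p') \<in> (E \<union> E\<inverse>)\<^sup>*" using E \<open>p < k\<close> \<open>p' < k\<close> unfolding connected_graph_def by blast
  ultimately obtain y where "(p, y) \<in> E \<union> E\<inverse>" by (metis converse_rtranclE)
  then show ?thesis using that by blast
qed

definition edge_vertices :: "(nat \<Rightarrow> nat list) \<Rightarrow> nat \<times> nat \<times> nat \<Rightarrow> nat \<times> nat" where
  "edge_vertices b = (\<lambda>(l, v, w). (b l ! v, b l ! w))"

lemma incr_tuple_edge_mem:
  assumes "b \<in> incr_tuples n k" "connected_graph k E" "(v, w) \<in> E"
  shows "(b ! v, b ! w) \<in> {(v, w). 1 \<le> v \<and> v < w \<and> w \<le> n}"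
proof -
  have vw: "v < w" "w < k" using connected_graph_edgeD assms(2,3) by auto
  have "b ! v < b ! w"
    using sorted_wrt_nth_less[OF incr_tuplesD(2)[OF assms(1)] vw(1)] vw incr_tuplesD(1)[OF assms(1)] by simp
  moreover have "b ! v \<in> set b" "b ! w \<in> set b"
    using incr_tuplesD(1)[OF assms(1)] vw by auto
  then have "b ! v \<in> {1..n}" "b ! w \<in> {1..n}"
    using incr_tuplesD(3)[OF assms(1)] by auto
  ultimately show ?thesis by auto
qed

text \<open>The witness is an edge of the \<open>l\<close>-th copy of the graph at a vertex outside \<open>a\<close> that lies in
  \<open>b l\<close> only. It exists because \<open>b l\<close> also meets \<open>a\<close>, which is where \<open>ki \<ge> 1\<close> is used.\<close>
lemma unshared_vertex_unique_edge:
  assumes b: "b \<in> PiE {..<m} (\<lambda>_. nbhd n ki kj a)" and unshared: "\<not> outside_vertices_shared m a b"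
    and E: "connected_graph kj E" and ki: "ki \<ge> 1"
  shows "\<exists>q0 \<in> {..<m} \<times> E. \<forall>q \<in> {..<m} \<times> E. q \<noteq> q0 \<longrightarrow> edge_vertices b q \<noteq> edge_vertices b q0"
proof -
  obtain l x where l: "l < m" and x: "x \<in> set (b l)" "x \<notin> set a"
    and only_l: "\<And>l'. l' < m \<Longrightarrow> l' \<noteq> l \<Longrightarrow> x \<notin> set (b l')"
    using unshared unfolding outside_vertices_shared_def by blast
  have bl: "\<And>l. l < m \<Longrightarrow> b l \<in> incr_tuples n kj" using b by (auto intro: nbhd_incr_tuples)
  have len: "\<And>l. l < m \<Longrightarrow> length (b l) = kj" using incr_tuplesD(1)[OF bl] .
  have "min 2 ki \<le> card (set a \<inter> set (b l))"
    using b l by (auto simp: nbhd_def)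
  then have "set a \<inter> set (b l) \<noteq> {}" using ki by auto
  then obtain y where "y \<in> set (b l)" "y \<noteq> x" using x(2) by blast
  then have "card {x, y} \<le> card (set (b l))" using x(1) by (intro card_mono) auto
  then have kj: "2 \<le> kj" using \<open>y \<noteq> x\<close> incr_tuplesD(5)[OF bl[OF l]] by simp
  obtain p where p: "p < kj" "b l ! p = x" using x(1) len[OF l] by (metis in_set_conv_nth)
  obtain v w where vw: "(v, w) \<in> E" "v = p \<or> w = p"
    using connected_graph_incident_edge[OF E kj p(1)] .
  show ?thesis
  proof (intro bexI[of _ "(l, v, w)"] ballI impI)
    show "(l, v, w) \<in> {..<m} \<times> E" using l vw(1) by simp
    fix q assume q: "q \<in> {..<m} \<times> E" "q \<noteq> (l, v, w)"
    obtain l' v' w' where q_eq: "q = (l', v', w')" by (cases q)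
    have l': "l' < m" "(v', w') \<in> E" using q q_eq by auto
    have ranges: "v < w" "w < kj" "v' < w'" "w' < kj"
      using connected_graph_edgeD[OF E] vw(1) l'(2) by auto
    show "edge_vertices b q \<noteq> edge_vertices b (l, v, w)"
    proof
      assume eq: "edge_vertices b q = edge_vertices b (l, v, w)"
      then have eq': "b l' ! v' = b l ! v" "b l' ! w' = b l ! w"
        unfolding edge_vertices_def q_eq by auto
      show False
      proof (cases "l' = l")
        case True
        then have "v' = v" "w' = w"
          using eq' ranges nth_eq_iff_index_eq[OF incr_tuplesD(4)[OF bl[OF l]]] len[OF l] by auto
        then show False using q(2) q_eq True by simp
      next
        case False
        have "x \<in> set (b l')"
          using vw(2) eq' p(2) ranges len[OF l'(1)] by (metis nth_mem order.strict_trans)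
        then show False using only_l[OF l'(1) False] by simp
      qed
    qed
  qed
qed

section \<open>Binomial estimates\<close>

lemma binomial_powr_neg_half_le:
  assumes "1 \<le> k" "k \<le> n"
  shows "real (n choose k) powr (-1/2) \<le> real k powr (real k / 2) * real n powr (- real k / 2)"
proof -
  have pos: "0 < real n / real k" using assms by simp
  have "real (n choose k) powr (-1/2) \<le> ((real n / real k) ^ k) powr (-1/2)"
    using binomial_ge_n_over_k_pow_k[OF assms(2)] pos by (intro powr_mono2') auto
  also have "\<dots> = (real n / real k) powr (- real k / 2)"
    using pos by (simp add: powr_realpow[symmetric] powr_powr)
  also have "\<dots> = real k powr (real k / 2) * real n powr (- real k / 2)"
    using assms by (simp add: powr_divide powr_minus_divide)
  finally show ?thesis .
qed

lemma power_mult_binomial_term_le_powr: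
  fixes n k ki r s m :: nat and X :: real
  assumes "1 \<le> k" "k \<le> n" "0 \<le> X" "s \<le> k" "2 * r \<le> (k - s) * m"
  shows "real (n ^ (ki + r)) * (real (n choose k) powr (-1/2) * X) ^ m
    \<le> X ^ m * real k powr (real k * real m / 2) * real n powr (real ki - real s * real m / 2)"
proof -
  have n: "0 < real n" using assms by simp
  have "(real (n choose k) powr (-1/2) * X) ^ m \<le> (real k powr (real k / 2) * real n powr (- real k / 2) * X) ^ m"
    using binomial_powr_neg_half_le[OF assms(1,2)] assms(3) by (intro power_mono mult_right_mono) auto
  also have "\<dots> = X ^ m * real k powr (real k * real m / 2) * real n powr (- real k * real m / 2)"
    using assms(1) n by (simp add: power_mult_distrib powr_power algebra_simps)
  finally have "real (n ^ (ki + r)) * (real (n choose k) powr (-1/2) * X) ^ m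
      \<le> X ^ m * real k powr (real k * real m / 2) * (real n powr (real ki + real r) * real n powr (- real k * real m / 2))"
    using n by (simp add: powr_realpow[symmetric] mult_left_mono ac_simps)
  also have "real n powr (real ki + real r) * real n powr (- real k * real m / 2)
      \<le> real n powr (real ki - real s * real m / 2)"
  proof -
    have "2 * real r \<le> (real k - real s) * real m"
      using assms(4,5) by (simp flip: of_nat_diff of_nat_mult)
    then have "real ki + real r + - real k * real m / 2 \<le> real ki - real s * real m / 2"
      by (simp add: algebra_simps)
    moreover have "1 \<le> real n" using assms(1,2) by simp
    ultimately show ?thesis by (simp add: powr_add[symmetric] powr_mono del: minus_mult_left)
  qed
  finally show ?thesis using assms(3) by (simp add: mult_left_mono)
qed

section \<open>The sampled graphon model\<close>

lemma subalgebra_gen_sigma: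
  assumes "\<And>v. v \<in> V \<Longrightarrow> U v \<in> borel_measurable M"
  shows "subalgebra M (gen_sigma M U V)"
proof -
  define A where "A = (\<Union>i\<in>V. {U i -` B \<inter> space M | B. B \<in> sets borel})"
  have "A \<subseteq> Pow (space M)" "A \<subseteq> sets M"
    unfolding A_def using assms by (auto intro: measurable_sets)
  then show ?thesis
    unfolding subalgebra_def gen_sigma_def A_def[symmetric] using sets.sigma_sets_subset[of A M] by auto
qed

lemma measurable_gen_sigma:
  assumes "v \<in> V"
  shows "U v \<in> borel_measurable (gen_sigma M U V)"
proof (rule measurableI)
  have space: "space (gen_sigma M U V) = space M"
    unfolding gen_sigma_def by (auto intro!: space_measure_of)
  fix B :: "real set" assume "B \<in> sets borel"
  then have "U v -` B \<inter> space M \<in> (\<Union>i\<in>V. {U i -` B \<inter> space M | B. B \<in> sets borel})"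
    using assms by blast
  then show "U v -` B \<inter> space (gen_sigma M U V) \<in> sets (gen_sigma M U V)"
    unfolding space unfolding gen_sigma_def by (auto intro: sigma_sets.Basic)
qed simp

lemma Uvec_in_unit_cube:
  assumes "set a \<subseteq> V" "\<And>v. v \<in> V \<Longrightarrow> U v \<omega> \<in> {0..1}"
  shows "Uvec U a \<omega> \<in> unit_cube (length a)"
proof -
  have "U (a ! v) \<omega> \<in> {0..1}" if "v < length a" for v
    using assms nth_mem[OF that] by blast
  then show ?thesis unfolding Uvec_def unit_cube_def by auto
qed

lemma measurable_comp_Uvec:
  assumes a: "set a \<subseteq> V" and U: "\<And>v. v \<in> V \<Longrightarrow> U v \<in> borel_measurable N"
    and range: "\<And>v \<omega>. v \<in> V \<Longrightarrow> \<omega> \<in> space N \<Longrightarrow> U v \<omega> \<in> {0..1}"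
    and \<psi>: "\<psi> \<in> borel_measurable (restrict_space (PiM {..<length a} (\<lambda>_. borel)) (unit_cube (length a)))"
  shows "(\<lambda>\<omega>. \<psi> (Uvec U a \<omega>)) \<in> borel_measurable N"
proof -
  have Pi: "Uvec U a \<in> measurable N (PiM {..<length a} (\<lambda>_. borel))"
    unfolding Uvec_def using a by (intro measurable_restrict U) auto
  have "Uvec U a \<in> measurable N (restrict_space (PiM {..<length a} (\<lambda>_. borel)) (unit_cube (length a)))"
  proof (rule measurable_restrict_space2[OF _ Pi], rule funcsetI)
    show "Uvec U a \<omega> \<in> unit_cube (length a)" if "\<omega> \<in> space N" for \<omega>
      using range that by (intro Uvec_in_unit_cube[OF a]) auto
  qed
  then show ?thesis using \<psi> by (rule measurable_compose)
qed

lemma graphon_measurable_comp: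
  assumes \<kappa>: "graphon \<kappa>" and f: "f \<in> borel_measurable N" "g \<in> borel_measurable N"
    and range: "\<And>\<omega>. \<omega> \<in> space N \<Longrightarrow> f \<omega> \<in> {0..1} \<and> g \<omega> \<in> {0..1}"
  shows "(\<lambda>\<omega>. \<kappa> (f \<omega>) (g \<omega>)) \<in> borel_measurable N"
proof -
  have "(\<lambda>\<omega>. (f \<omega>, g \<omega>)) \<in> measurable N (restrict_space (borel \<Otimes>\<^sub>M borel) ({0..1} \<times> {0..1}))"
    using f range by (intro measurable_restrict_space2 measurable_Pair) auto
  moreover have "case_prod \<kappa> \<in> borel_measurable (restrict_space (borel \<Otimes>\<^sub>M borel) ({0..1} \<times> {0..1}))"
    using \<kappa> unfolding graphon_def by blast
  ultimately have "(\<lambda>\<omega>. case_prod \<kappa> (f \<omega>, g \<omega>)) \<in> borel_measurable N"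
    by (rule measurable_compose)
  then show ?thesis by simp
qed

lemma graphon_range: "graphon \<kappa> \<Longrightarrow> x \<in> {0..1} \<Longrightarrow> y \<in> {0..1} \<Longrightarrow> \<kappa> x y \<in> {0..1}"
  unfolding graphon_def by blast

lemma scaled_in_simplex_D:
  assumes "a \<in> incr_tuples n k"
  shows "scaled n a \<in> simplex_D (length a)"
proof -
  have "real (a ! v) / real n \<le> real (a ! w) / real n" if "v \<le> w" "w < length a" for v w
    using sorted_wrt_nth_less[OF incr_tuplesD(2)[OF assms], of v w] that
    by (cases "v = w") (auto intro: divide_right_mono)
  then show ?thesis unfolding simplex_D_def scaled_def by auto
qed

locale graphon_sample = prob_space M for M :: "'a measure" +
  fixes n :: nat and U :: "nat \<Rightarrow> 'a \<Rightarrow> real" and Y :: "nat \<Rightarrow> nat \<Rightarrow> 'a \<Rightarrow> real"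
    and \<kappa> :: "real \<Rightarrow> real \<Rightarrow> real" and B :: real
  assumes U_measurable: "\<And>v. v \<in> {1..n} \<Longrightarrow> U v \<in> borel_measurable M"
    and U_range: "\<And>v \<omega>. v \<in> {1..n} \<Longrightarrow> \<omega> \<in> space M \<Longrightarrow> U v \<omega> \<in> {0..1}"
    and Y_measurable: "\<And>v w. 1 \<le> v \<Longrightarrow> v < w \<Longrightarrow> w \<le> n \<Longrightarrow> Y v w \<in> borel_measurable M"
    and Y_bounded: "\<And>v w \<omega>. 1 \<le> v \<Longrightarrow> v < w \<Longrightarrow> w \<le> n \<Longrightarrow> \<omega> \<in> space M \<Longrightarrow> \<bar>Y v w \<omega>\<bar> \<le> B"
    and Y_cond_indep: "cond_indep_vars M (gen_sigma M U {1..n})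
      (\<lambda>(v, w). Y v w) {(v, w). 1 \<le> v \<and> v < w \<and> w \<le> n}"
    and Y_cond_exp: "\<And>v w. 1 \<le> v \<Longrightarrow> v < w \<Longrightarrow> w \<le> n \<Longrightarrow>
      AE \<omega> in M. real_cond_exp M (gen_sigma M U {1..n}) (Y v w) \<omega> = \<kappa> (U v \<omega>) (U w \<omega>)"
    and graphon: "graphon \<kappa>"

sublocale graphon_sample \<subseteq> edges: bounded_cond_indep M "gen_sigma M U {1..n}" "\<lambda>(v, w). Y v w"
  "{(v, w). 1 \<le> v \<and> v < w \<and> w \<le> n}" B
  using U_measurable Y_measurable Y_bounded Y_cond_indep
  by unfold_locales (auto intro: subalgebra_gen_sigma)

context graphon_sample
begin

lemma kappa_U_measurable:
  assumes "(v, w) \<in> {(v, w). 1 \<le> v \<and> v < w \<and> w \<le> n}"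
  shows "(\<lambda>\<omega>. \<kappa> (U v \<omega>) (U w \<omega>)) \<in> borel_measurable (gen_sigma M U {1..n})"
proof -
  have "space (gen_sigma M U {1..n}) = space M"
    using edges.subalg unfolding subalgebra_def by simp
  then show ?thesis
    using assms U_range by (intro graphon_measurable_comp[OF graphon] measurable_gen_sigma) auto
qed

lemma abs_kappa_U_le:
  assumes "(v, w) \<in> {(v, w). 1 \<le> v \<and> v < w \<and> w \<le> n}" "\<omega> \<in> space M"
  shows "\<bar>\<kappa> (U v \<omega>) (U w \<omega>)\<bar> \<le> 1"
  using graphon_range[OF graphon, of "U v \<omega>" "U w \<omega>"] U_range assms by auto

end

locale graphon_sample_term = graphon_sample +
  fixes k :: nat and E :: "(nat \<times> nat) set" and \<phi> \<psi> :: "(nat \<Rightarrow> real) \<Rightarrow> real" and C\<phi> C\<psi> :: real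
  assumes connected: "connected_graph k E"
    and \<phi>_bounded: "\<And>x. x \<in> simplex_D k \<Longrightarrow> \<bar>\<phi> x\<bar> \<le> C\<phi>"
    and \<psi>_measurable: "\<psi> \<in> borel_measurable (restrict_space (PiM {..<k} (\<lambda>_. borel)) (unit_cube k))"
    and \<psi>_bounded: "\<And>x. x \<in> unit_cube k \<Longrightarrow> \<bar>\<psi> x\<bar> \<le> C\<psi>"
begin

abbreviation X :: "nat list \<Rightarrow> 'a \<Rightarrow> real" where
  "X \<equiv> X_term M n k E \<phi> \<psi> \<kappa> U Y"

text \<open>The factor 2 comes from the centering of \<open>\<psi>\<close> in \<open>Phi_term\<close> when \<open>k = 1\<close>.\<close>
abbreviation X_bound :: real where
  "X_bound \<equiv> real (n choose k) powr (-1/2) * (C\<phi> * (2 * C\<psi>) * (\<bar>B\<bar> + 1) ^ card E)"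

lemma C\<phi>_nonneg: "0 \<le> C\<phi>"
  using \<phi>_bounded[of "\<lambda>_\<in>{..<k}. 0"] by (auto simp: simplex_D_def)

lemma C\<psi>_nonneg: "0 \<le> C\<psi>"
  using \<psi>_bounded[of "\<lambda>_\<in>{..<k}. 0"] by (auto simp: unit_cube_def)

lemma psi_Uvec_measurable:
  assumes "b \<in> incr_tuples n k"
  shows "(\<lambda>\<omega>. \<psi> (Uvec U b \<omega>)) \<in> borel_measurable (gen_sigma M U {1..n})"
proof -
  have "space (gen_sigma M U {1..n}) = space M"
    using edges.subalg unfolding subalgebra_def by simp
  then show ?thesis
    using incr_tuplesD(1,3)[OF assms] U_range \<psi>_measurable
    by (intro measurable_comp_Uvec[where V="{1..n}"] measurable_gen_sigma) auto
qed

lemma abs_psi_Uvec_le: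
  assumes "b \<in> incr_tuples n k" "\<omega> \<in> space M"
  shows "\<bar>\<psi> (Uvec U b \<omega>)\<bar> \<le> C\<psi>"
  using Uvec_in_unit_cube[OF incr_tuplesD(3)[OF assms(1)], of U \<omega>] U_range[OF _ assms(2)]
    \<psi>_bounded incr_tuplesD(1)[OF assms(1)] by auto

lemma Phi_term_measurable:
  "b \<in> incr_tuples n k \<Longrightarrow> Phi_term M k \<psi> U b \<in> borel_measurable (gen_sigma M U {1..n})"
  using psi_Uvec_measurable unfolding Phi_term_def by simp

lemma abs_Phi_term_le:
  assumes "b \<in> incr_tuples n k" "\<omega> \<in> space M"
  shows "\<bar>Phi_term M k \<psi> U b \<omega>\<bar> \<le> 2 * C\<psi>"
proof -
  have "\<bar>\<integral>\<omega>'. \<psi> (Uvec U b \<omega>') \<partial>M\<bar> \<le> C\<psi>"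
    using psi_Uvec_measurable[OF assms(1)] abs_psi_Uvec_le[OF assms(1)]
    by (intro abs_integral_le_bound edges.measurable_from_G)
  then show ?thesis
    unfolding Phi_term_def using abs_psi_Uvec_le[OF assms] C\<psi>_nonneg by auto
qed

lemma edge_factor_measurable:
  assumes "b \<in> incr_tuples n k" "(v, w) \<in> E"
  shows "(\<lambda>\<omega>. Y (b ! v) (b ! w) \<omega> - \<kappa> (U (b ! v) \<omega>) (U (b ! w) \<omega>)) \<in> borel_measurable M"
  using incr_tuple_edge_mem[OF assms(1) connected assms(2)]
  by (intro borel_measurable_diff Y_measurable edges.measurable_from_G[OF kappa_U_measurable]) auto

lemma abs_edge_factor_le:
  assumes "b \<in> incr_tuples n k" "(v, w) \<in> E" "\<omega> \<in> space M"
  shows "\<bar>Y (b ! v) (b ! w) \<omega> - \<kappa> (U (b ! v) \<omega>) (U (b ! w) \<omega>)\<bar> \<le> \<bar>B\<bar> + 1"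
proof -
  have "(b ! v, b ! w) \<in> {(v, w). 1 \<le> v \<and> v < w \<and> w \<le> n}"
    by (rule incr_tuple_edge_mem[OF assms(1) connected assms(2)])
  then have "\<bar>Y (b ! v) (b ! w) \<omega>\<bar> \<le> B" "\<bar>\<kappa> (U (b ! v) \<omega>) (U (b ! w) \<omega>)\<bar> \<le> 1"
    using Y_bounded abs_kappa_U_le assms(3) by auto
  then show ?thesis by linarith
qed

lemma T_term_measurable:
  "b \<in> incr_tuples n k \<Longrightarrow> T_term k E Y \<kappa> U b \<in> borel_measurable M"
  unfolding T_term_def using edge_factor_measurable by (auto intro!: borel_measurable_prod)

lemma abs_T_term_le:
  assumes "b \<in> incr_tuples n k" "\<omega> \<in> space M"
  shows "\<bar>T_term k E Y \<kappa> U b \<omega>\<bar> \<le> (\<bar>B\<bar> + 1) ^ card E"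
  unfolding T_term_def using abs_edge_factor_le[OF assms(1) _ assms(2)]
  by (auto intro!: abs_prod_le_power)

lemma X_measurable: "b \<in> incr_tuples n k \<Longrightarrow> X b \<in> borel_measurable M"
  unfolding X_term_def
  using T_term_measurable edges.measurable_from_G[OF Phi_term_measurable] by simp

lemma abs_X_le:
  assumes "b \<in> incr_tuples n k" "\<omega> \<in> space M"
  shows "\<bar>X b \<omega>\<bar> \<le> X_bound"
proof -
  have "\<bar>\<phi> (scaled n b)\<bar> \<le> C\<phi>"
    using \<phi>_bounded scaled_in_simplex_D[OF assms(1)] incr_tuplesD(1)[OF assms(1)] by simp
  then have "\<bar>\<phi> (scaled n b)\<bar> * \<bar>Phi_term M k \<psi> U b \<omega>\<bar> * \<bar>T_term k E Y \<kappa> U b \<omega>\<bar>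
      \<le> C\<phi> * (2 * C\<psi>) * (\<bar>B\<bar> + 1) ^ card E"
    using abs_Phi_term_le[OF assms] abs_T_term_le[OF assms] C\<phi>_nonneg C\<psi>_nonneg
    by (intro mult_mono) auto
  then show ?thesis
    unfolding X_term_def abs_mult by (simp add: mult.assoc mult_left_mono)
qed

lemma integral_prod_X_eq_0:
  assumes ki: "ki \<ge> 1" and b: "b \<in> PiE {..<m} (\<lambda>_. nbhd n ki k a)"
    and unshared: "\<not> outside_vertices_shared m a b"
  shows "(\<integral>\<omega>. (\<Prod>l<m. X (b l) \<omega>) \<partial>M) = 0"
proof -
  define Q where "Q = {..<m} \<times> E"
  define \<kappa>U where "\<kappa>U = (\<lambda>(v, w) \<omega>. \<kappa> (U v \<omega>) (U w \<omega>))"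
  define c where "c \<omega> = (\<Prod>l<m. real (n choose k) powr (-1/2) * \<phi> (scaled n (b l)) * Phi_term M k \<psi> U (b l) \<omega>)"
    for \<omega>
  obtain q0 where q0: "q0 \<in> Q" "\<And>q. q \<in> Q \<Longrightarrow> q \<noteq> q0 \<Longrightarrow> edge_vertices b q \<noteq> edge_vertices b q0"
    using unshared_vertex_unique_edge[OF b unshared connected ki] unfolding Q_def by blast
  have bl: "\<And>l. l < m \<Longrightarrow> b l \<in> incr_tuples n k" using b by (auto intro: nbhd_incr_tuples)
  have "k \<noteq> 1" using q0(1) connected_graph_edgeD[OF connected] unfolding Q_def by fastforce
  have edges_mem: "edge_vertices b q \<in> {(v, w). 1 \<le> v \<and> v < w \<and> w \<le> n}" if q: "q \<in> Q" for q
  proof -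
    obtain l v w where "q = (l, v, w)" "l < m" "(v, w) \<in> E" using q unfolding Q_def by (cases q) auto
    then show ?thesis unfolding edge_vertices_def using incr_tuple_edge_mem[OF bl connected] by simp
  qed
  have "(\<Prod>l<m. X (b l) \<omega>)
      = c \<omega> * (\<Prod>q\<in>Q. (\<lambda>(v, w). Y v w) (edge_vertices b q) \<omega> - \<kappa>U (edge_vertices b q) \<omega>)" for \<omega>
    using \<open>k \<noteq> 1\<close>
    by (simp add: X_term_def T_term_def c_def Q_def \<kappa>U_def edge_vertices_def prod.distrib
        prod.cartesian_product case_prod_beta')
  moreover have "(\<integral>\<omega>. c \<omega> * (\<Prod>q\<in>Q. (\<lambda>(v, w). Y v w) (edge_vertices b q) \<omega> - \<kappa>U (edge_vertices b q) \<omega>) \<partial>M)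
      = 0"
  proof (rule edges.integral_prod_centered_eq_0[where \<epsilon>="edge_vertices b" and \<kappa>=\<kappa>U and c=c,
        OF _ q0(1) edges_mem q0(2)])
    show "finite Q" using finite_connected_graph_edges[OF connected] unfolding Q_def by simp
    show "\<kappa>U j \<in> borel_measurable (gen_sigma M U {1..n})" if "j \<in> {(v, w). 1 \<le> v \<and> v < w \<and> w \<le> n}" for j
      using kappa_U_measurable that unfolding \<kappa>U_def by auto
    show "\<bar>\<kappa>U j \<omega>\<bar> \<le> 1" if "j \<in> {(v, w). 1 \<le> v \<and> v < w \<and> w \<le> n}" "\<omega> \<in> space M" for j \<omega>
      using abs_kappa_U_le that unfolding \<kappa>U_def by auto
    show "AE \<omega> in M. real_cond_exp M (gen_sigma M U {1..n}) ((\<lambda>(v, w). Y v w) (edge_vertices b q0)) \<omega>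
        = \<kappa>U (edge_vertices b q0) \<omega>"
      using edges_mem[OF q0(1)] Y_cond_exp unfolding \<kappa>U_def by (auto split: prod.splits)
    show "c \<in> borel_measurable (gen_sigma M U {1..n})"
      unfolding c_def using Phi_term_measurable bl by (auto intro!: borel_measurable_prod)
    show "\<bar>c \<omega>\<bar> \<le> (real (n choose k) powr (-1/2) * C\<phi> * (2 * C\<psi>)) ^ m" if "\<omega> \<in> space M" for \<omega>
    proof -
      have "\<bar>\<phi> (scaled n (b l))\<bar> * \<bar>Phi_term M k \<psi> U (b l) \<omega>\<bar> \<le> C\<phi> * (2 * C\<psi>)" if "l < m" for l
        using \<phi>_bounded scaled_in_simplex_D[OF bl[OF that]] incr_tuplesD(1)[OF bl[OF that]]
          abs_Phi_term_le[OF bl[OF that] \<open>\<omega> \<in> space M\<close>] C\<phi>_nonneg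
        by (intro mult_mono) auto
      then have "\<bar>c \<omega>\<bar> \<le> (real (n choose k) powr (-1/2) * C\<phi> * (2 * C\<psi>)) ^ card {..<m}"
        unfolding c_def by (intro abs_prod_le_power) (simp add: abs_mult mult.assoc mult_left_mono)
      then show ?thesis by simp
    qed
  qed
  ultimately show ?thesis by simp
qed

lemma abs_integral_prod_X_le:
  assumes "\<And>l. l < m \<Longrightarrow> b l \<in> incr_tuples n k"
  shows "integrable M (\<lambda>\<omega>. \<Prod>l<m. X (b l) \<omega>)" "\<bar>\<integral>\<omega>. (\<Prod>l<m. X (b l) \<omega>) \<partial>M\<bar> \<le> X_bound ^ m"
proof -
  have measurable: "(\<lambda>\<omega>. \<Prod>l<m. X (b l) \<omega>) \<in> borel_measurable M"
    using assms X_measurable by auto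
  have bounded: "\<bar>\<Prod>l<m. X (b l) \<omega>\<bar> \<le> X_bound ^ m" if "\<omega> \<in> space M" for \<omega>
    using abs_prod_le_power[of "{..<m}" "\<lambda>l. X (b l) \<omega>"] abs_X_le[OF assms that] by simp
  show "integrable M (\<lambda>\<omega>. \<Prod>l<m. X (b l) \<omega>)" by (rule integrable_bounded[OF measurable bounded])
  show "\<bar>\<integral>\<omega>. (\<Prod>l<m. X (b l) \<omega>) \<partial>M\<bar> \<le> X_bound ^ m" by (rule abs_integral_le_bound[OF measurable bounded])
qed

lemma abs_integral_sum_prod_X_le:
  assumes ki: "ki \<ge> 1"
  shows "\<bar>\<integral>\<omega>. (\<Sum>a\<in>incr_tuples n ki. \<Sum>b\<in>PiE {..<m} (\<lambda>_. nbhd n ki k a). \<Prod>l<m. X (b l) \<omega>) \<partial>M\<bar>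
    \<le> real (card {(a, b). a \<in> incr_tuples n ki \<and> b \<in> PiE {..<m} (\<lambda>_. nbhd n ki k a)
                          \<and> outside_vertices_shared m a b}) * X_bound ^ m"
proof -
  define Pairs where "Pairs = (SIGMA a:incr_tuples n ki. PiE {..<m} (\<lambda>_. nbhd n ki k a))"
  define f where "f (p :: nat list \<times> (nat \<Rightarrow> nat list)) \<omega> = (\<Prod>l<m. X (snd p l) \<omega>)" for p \<omega>
  have finite_Pairs: "finite Pairs"
    unfolding Pairs_def using finite_incr_tuples finite_nbhd by (auto intro!: finite_PiE)
  have tuples: "snd p l \<in> incr_tuples n k" if "p \<in> Pairs" "l < m" for p l
  proof -
    obtain a b where p: "p = (a, b)" by (cases p)
    then have "b \<in> PiE {..<m} (\<lambda>_. nbhd n ki k a)" using that(1) unfolding Pairs_def by simp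
    then have "b l \<in> nbhd n ki k a" using that(2) by (metis PiE_mem lessThan_iff)
    then show ?thesis unfolding p by (simp add: nbhd_incr_tuples)
  qed
  have "(\<integral>\<omega>. (\<Sum>a\<in>incr_tuples n ki. \<Sum>b\<in>PiE {..<m} (\<lambda>_. nbhd n ki k a). \<Prod>l<m. X (b l) \<omega>) \<partial>M)
      = (\<integral>\<omega>. (\<Sum>p\<in>Pairs. f p \<omega>) \<partial>M)"
    unfolding Pairs_def f_def
    using finite_incr_tuples finite_nbhd by (subst sum.Sigma) (auto intro!: finite_PiE simp: case_prod_beta')
  also have "\<dots> = (\<Sum>p\<in>Pairs. \<integral>\<omega>. f p \<omega> \<partial>M)"
    unfolding f_def using abs_integral_prod_X_le(1)[OF tuples] by (intro Bochner_Integration.integral_sum)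
  finally have "\<bar>\<integral>\<omega>. (\<Sum>a\<in>incr_tuples n ki. \<Sum>b\<in>PiE {..<m} (\<lambda>_. nbhd n ki k a). \<Prod>l<m. X (b l) \<omega>) \<partial>M\<bar>
      \<le> (\<Sum>p\<in>Pairs. \<bar>\<integral>\<omega>. f p \<omega> \<partial>M\<bar>)"
    by (simp add: sum_abs)
  also have "\<dots> \<le> (\<Sum>p\<in>Pairs. if outside_vertices_shared m (fst p) (snd p) then X_bound ^ m else 0)"
  proof (rule sum_mono)
    fix p assume p: "p \<in> Pairs"
    show "\<bar>\<integral>\<omega>. f p \<omega> \<partial>M\<bar> \<le> (if outside_vertices_shared m (fst p) (snd p) then X_bound ^ m else 0)"
      using abs_integral_prod_X_le(2)[OF tuples[OF p]] integral_prod_X_eq_0[OF ki, of "snd p" m "fst p"] p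
      unfolding f_def Pairs_def by auto
  qed
  also have "\<dots> = real (card {p \<in> Pairs. outside_vertices_shared m (fst p) (snd p)}) * X_bound ^ m"
    using finite_Pairs by (simp add: sum.inter_filter[symmetric])
  also have "{p \<in> Pairs. outside_vertices_shared m (fst p) (snd p)}
      = {(a, b). a \<in> incr_tuples n ki \<and> b \<in> PiE {..<m} (\<lambda>_. nbhd n ki k a) \<and> outside_vertices_shared m a b}"
  proof (intro set_eqI)
    fix p :: "nat list \<times> (nat \<Rightarrow> nat list)"
    show "p \<in> {p \<in> Pairs. outside_vertices_shared m (fst p) (snd p)} \<longleftrightarrow>
        p \<in> {(a, b). a \<in> incr_tuples n ki \<and> b \<in> PiE {..<m} (\<lambda>_. nbhd n ki k a) \<and> outside_vertices_shared m a b}"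
      by (cases p) (simp add: Pairs_def)
  qed
  finally show ?thesis .
qed

lemma abs_integral_sum_prod_X_le_powr:
  assumes n: "1 \<le> n" and k: "1 \<le> k" and ki: "1 \<le> ki" and m: "1 \<le> m"
  defines "r \<equiv> (k - min 2 ki) * m div 2"
  shows "\<bar>\<integral>\<omega>. (\<Sum>a\<in>incr_tuples n ki. \<Sum>b\<in>PiE {..<m} (\<lambda>_. nbhd n ki k a). \<Prod>l<m. X (b l) \<omega>) \<partial>M\<bar>
    \<le> real ((ki + r) ^ (k * m)) * (C\<phi> * (2 * C\<psi>) * (\<bar>B\<bar> + 1) ^ card E) ^ m
       * real k powr (real k * real m / 2) * real n powr (real ki - real (min 2 ki) * real m / 2)"
    (is "?lhs \<le> ?rhs")
proof -
  define Shared where "Shared = {(a, b). a \<in> incr_tuples n ki \<and> b \<in> PiE {..<m} (\<lambda>_. nbhd n ki k a)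
                                      \<and> outside_vertices_shared m a b}"
  have lhs: "?lhs \<le> real (card Shared) * X_bound ^ m"
    unfolding Shared_def by (rule abs_integral_sum_prod_X_le[OF ki])
  have "0 \<le> C\<phi> * (2 * C\<psi>) * (\<bar>B\<bar> + 1) ^ card E" using C\<phi>_nonneg C\<psi>_nonneg by simp
  then have rhs_nonneg: "0 \<le> ?rhs" by simp
  consider "k < min 2 ki" | "n < k" | "min 2 ki \<le> k" "k \<le> n" by linarith
  then show ?thesis
  proof cases
    case 1
    then have "PiE {..<m} (\<lambda>_. nbhd n ki k a) = {}" for a
      using m 1 by (auto simp: nbhd_eq_empty PiE_eq_empty_iff intro!: exI[of _ 0])
    then have "Shared = {}" unfolding Shared_def by blast
    then show ?thesis using lhs rhs_nonneg by simp
  next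
    case 2
    then have "X_bound ^ m = 0" using m by simp
    with lhs have "?lhs \<le> 0" by (simp only: mult_zero_right)
    with rhs_nonneg show ?thesis by linarith
  next
    case 3
    have card_le: "real (card Shared) \<le> real (n ^ (ki + r)) * real ((ki + r) ^ (k * m))"
      using card_outside_vertices_shared_le[OF n, where m=m and ki=ki and kj=k] unfolding Shared_def r_def
      by (simp only: of_nat_mult[symmetric] of_nat_le_iff)
    have "0 \<le> X_bound" using C\<phi>_nonneg C\<psi>_nonneg by simp
    then have "real (card Shared) * X_bound ^ m \<le> real (n ^ (ki + r)) * real ((ki + r) ^ (k * m)) * X_bound ^ m"
      by (intro mult_right_mono[OF card_le]) simp
    also have "\<dots> = real ((ki + r) ^ (k * m)) * (real (n ^ (ki + r)) * X_bound ^ m)"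
      by (simp only: ac_simps)
    also have "real (n ^ (ki + r)) * X_bound ^ m \<le> (C\<phi> * (2 * C\<psi>) * (\<bar>B\<bar> + 1) ^ card E) ^ m
       * real k powr (real k * real m / 2) * real n powr (real ki - real (min 2 ki) * real m / 2)"
      using C\<phi>_nonneg C\<psi>_nonneg
      by (intro power_mult_binomial_term_le_powr[OF k 3(2) _ 3(1)]) (simp_all add: r_def)
    finally have "real (card Shared) * X_bound ^ m \<le> ?rhs"
      by (simp add: mult.assoc mult_left_mono)
    with lhs show ?thesis by linarith
  qed
qed

end

theorem lemma6:
  fixes d :: nat and k :: "nat \<Rightarrow> nat" and F :: "nat \<Rightarrow> (nat \<times> nat) set"
    and \<phi> \<psi> :: "nat \<Rightarrow> (nat \<Rightarrow> real) \<Rightarrow> real"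
    and \<kappa> :: "real \<Rightarrow> real \<Rightarrow> real" and B :: real
    and M :: "nat \<Rightarrow> 'a measure" and U :: "nat \<Rightarrow> nat \<Rightarrow> 'a \<Rightarrow> real"
    and Y :: "nat \<Rightarrow> nat \<Rightarrow> nat \<Rightarrow> 'a \<Rightarrow> real"
    and i j m :: nat
  assumes d: "d \<ge> 1"
    and k: "\<And>i. i \<in> {1..d} \<Longrightarrow> k i \<ge> 1"
    and F: "\<And>i. i \<in> {1..d} \<Longrightarrow> connected_graph (k i) (F i)"
    and \<phi>_meas: "\<And>i. i \<in> {1..d} \<Longrightarrow>
        \<phi> i \<in> borel_measurable (restrict_space (PiM {..<k i} (\<lambda>_. borel)) (simplex_D (k i)))"
    and \<phi>_bdd: "\<And>i. i \<in> {1..d} \<Longrightarrow> \<exists>c. \<forall>x\<in>simplex_D (k i). \<bar>\<phi> i x\<bar> \<le> c"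
    and \<psi>_meas: "\<And>i. i \<in> {1..d} \<Longrightarrow>
        \<psi> i \<in> borel_measurable (restrict_space (PiM {..<k i} (\<lambda>_. borel)) (unit_cube (k i)))"
    and \<psi>_bdd: "\<And>i. i \<in> {1..d} \<Longrightarrow> \<exists>c. \<forall>x\<in>unit_cube (k i). \<bar>\<psi> i x\<bar> \<le> c"
    and \<kappa>: "graphon \<kappa>"
    and M: "\<And>n. n \<ge> 1 \<Longrightarrow> prob_space (M n)"
    and U_indep: "\<And>n. n \<ge> 1 \<Longrightarrow> prob_space.indep_vars (M n) (\<lambda>_. borel) (U n) {1..n}"
    and U_range: "\<And>n v \<omega>. n \<ge> 1 \<Longrightarrow> v \<in> {1..n} \<Longrightarrow> \<omega> \<in> space (M n) \<Longrightarrow> U n v \<omega> \<in> {0..1}"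
    and Y_meas: "\<And>n v w. n \<ge> 1 \<Longrightarrow> 1 \<le> v \<Longrightarrow> v < w \<Longrightarrow> w \<le> n \<Longrightarrow>
        Y n v w \<in> borel_measurable (M n)"
    and Y_bdd: "\<And>n v w \<omega>. n \<ge> 1 \<Longrightarrow> 1 \<le> v \<Longrightarrow> v < w \<Longrightarrow> w \<le> n \<Longrightarrow> \<omega> \<in> space (M n) \<Longrightarrow>
        \<bar>Y n v w \<omega>\<bar> \<le> B"
    and Y_cind: "\<And>n. n \<ge> 1 \<Longrightarrow> cond_indep_vars (M n) (gen_sigma (M n) (U n) {1..n})
        (\<lambda>(v, w). Y n v w) {(v, w). 1 \<le> v \<and> v < w \<and> w \<le> n}"
    and Y_cexp: "\<And>n v w. n \<ge> 1 \<Longrightarrow> 1 \<le> v \<Longrightarrow> v < w \<Longrightarrow> w \<le> n \<Longrightarrow>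
        AE \<omega> in M n. real_cond_exp (M n) (gen_sigma (M n) (U n) {1..n}) (Y n v w) \<omega>
                       = \<kappa> (U n v \<omega>) (U n w \<omega>)"
    and ij: "i \<in> {1..d}" "j \<in> {1..d}"
    and m: "m \<ge> 2"
  shows "\<exists>C > 0. \<forall>n \<ge> 1.
     \<bar>integral\<^sup>L (M n) (\<lambda>\<omega>. \<Sum>a\<in>incr_tuples n (k i).
          \<Sum>b\<in>PiE {..<m} (\<lambda>_. nbhd n (k i) (k j) a).
            \<Prod>l<m. X_term (M n) n (k j) (F j) (\<phi> j) (\<psi> j) \<kappa> (U n) (Y n) (b l) \<omega>)\<bar>
     \<le> (if k i = 1 then C * real n powr (1 - real m / 2) else C * real n powr (real (k i) - real m))"
proof -
  have ki: "1 \<le> k i" and kj: "1 \<le> k j" and m1: "1 \<le> m" using k ij m by auto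
  obtain c\<phi> c\<psi> where "\<forall>x\<in>simplex_D (k j). \<bar>\<phi> j x\<bar> \<le> c\<phi>" "\<forall>x\<in>unit_cube (k j). \<bar>\<psi> j x\<bar> \<le> c\<psi>"
    using \<phi>_bdd[OF ij(2)] \<psi>_bdd[OF ij(2)] by blast
  then have c\<phi>: "\<And>x. x \<in> simplex_D (k j) \<Longrightarrow> \<bar>\<phi> j x\<bar> \<le> \<bar>c\<phi>\<bar>"
    and c\<psi>: "\<And>x. x \<in> unit_cube (k j) \<Longrightarrow> \<bar>\<psi> j x\<bar> \<le> \<bar>c\<psi>\<bar>"
    by force+
  define C0 where "C0 = real ((k i + (k j - min 2 (k i)) * m div 2) ^ (k j * m))
    * (\<bar>c\<phi>\<bar> * (2 * \<bar>c\<psi>\<bar>) * (\<bar>B\<bar> + 1) ^ card (F j)) ^ m * real (k j) powr (real (k j) * real m / 2)"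
  have bound: "\<bar>integral\<^sup>L (M n) (\<lambda>\<omega>. \<Sum>a\<in>incr_tuples n (k i).
          \<Sum>b\<in>PiE {..<m} (\<lambda>_. nbhd n (k i) (k j) a).
            \<Prod>l<m. X_term (M n) n (k j) (F j) (\<phi> j) (\<psi> j) \<kappa> (U n) (Y n) (b l) \<omega>)\<bar>
     \<le> (if k i = 1 then (C0 + 1) * real n powr (1 - real m / 2)
         else (C0 + 1) * real n powr (real (k i) - real m))" if n: "n \<ge> 1" for n
  proof -
    have "\<forall>v\<in>{1..n}. U n v \<in> borel_measurable (M n)"
      using U_indep[OF n] unfolding prob_space.indep_vars_def2[OF M[OF n]] by blast
    then have "graphon_sample (M n) n (U n) (Y n) \<kappa> B"
      using U_range[OF n] Y_meas[OF n] Y_bdd[OF n] Y_cind[OF n] Y_cexp[OF n] \<kappa>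
      by (intro graphon_sample.intro[OF M[OF n]] graphon_sample_axioms.intro) auto
    then interpret graphon_sample_term "M n" n "U n" "Y n" \<kappa> B "k j" "F j" "\<phi> j" "\<psi> j" "\<bar>c\<phi>\<bar>" "\<bar>c\<psi>\<bar>"
      using F[OF ij(2)] c\<phi> \<psi>_meas[OF ij(2)] c\<psi>
      by (intro graphon_sample_term.intro graphon_sample_term_axioms.intro)
    note abs_integral_sum_prod_X_le_powr[OF n kj ki m1, folded C0_def]
    also have "C0 * real n powr (real (k i) - real (min 2 (k i)) * real m / 2)
      \<le> (C0 + 1) * real n powr (real (k i) - real (min 2 (k i)) * real m / 2)"
      by (simp add: distrib_right)
    also have "real (k i) - real (min 2 (k i)) * real m / 2
        = (if k i = 1 then 1 - real m / 2 else real (k i) - real m)"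
      using ki by auto
    finally show ?thesis by (simp add: if_distrib)
  qed
  moreover have "0 < C0 + 1" unfolding C0_def by (intro add_nonneg_pos mult_nonneg_nonneg) auto
  ultimately show ?thesis by blast
qed


end
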